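(* Let $0\le s<t\le T$ and let $f_{ts}$ be a function analytic in a neighbourhood of $\Pi_{(s,t)}=\{z=a+ib\in\mathbb C: a\in[s,t],\ b\in[-(t-s),t-s]\}$, real-valued on $[s,t]$ and bounded on $\Pi_{(s,t)}$. Then for any $\alpha\in(0,2H)$ and any $\varepsilon,\eta>0$, $$E\Big[\Big\|\int_s^tf_{ts}(u)\,dX^\varepsilon_u-\int_s^tf_{ts}(u)\,dX^\eta_u\Big\|^2\Big]\le c_\alpha\|f_{ts}\|^2_{\infty,\Pi_{(s,t)}}|t-s|^{2H-\alpha}|\varepsilon-\eta|^\alpha,$$ where the constant $c_\alpha$ does not depend on $s,t,\varepsilon,\eta$.
   Context: Fix $H\in(1/3,1/2)$, $n\ge1$, $T>0$. Let $\Pi^+=\{\mathrm{Im}\,z>0\}$, $c_H=\frac{H(1-2H)}{2\cos(\pi H)}$, and let $X'^{+,(1)},\dots,X'^{+,(n)}$ be independent copies of a centered complex Gaussian process $\{X'^+_z\}_{z\in\Pi^+}$ with analytic sample paths such that $E[X'^+_zX'^+_w]=0$ and $E[X'^+_z\overline{X'^+_w}]=c_H(-i(z-\bar w))^{2H-2}$ (principal branch). For $\varepsilon>0$ and $t\in\mathbb R$, $X^{\varepsilon,(j)}_t=2\,\mathrm{Re}\int_{i\varepsilon}^{t+i\varepsilon}X'^{+,(j)}_zdz$ (along any path in $\Pi^+$), and $X^\varepsilon=(X^{\varepsilon,(1)},\dots,X^{\varepsilon,(n)})$, a smooth $\mathbb R^{1,n}$-valued process; $\int_s^tf(u)dX^\varepsilon_u$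 is a Riemann–Stieltjes integral. $\|f\|_{\infty,\Pi}=\sup_{z\in\Pi}|f(z)|$. *)

theory Defs
  imports "HOL-Probability.Probability" "HOL-Complex_Analysis.Complex_Analysis"
begin

definition upper_half :: "complex set" where
  "upper_half = {z. Im z > 0}"

definition cH :: "real \<Rightarrow> real" where
  "cH H = H * (1 - 2 * H) / (2 * cos (pi * H))"

definition real_gaussian_rv :: "'a measure \<Rightarrow> ('a \<Rightarrow> real) \<Rightarrow> bool" where
  "real_gaussian_rv M Y \<longleftrightarrow>
     Y \<in> borel_measurable M \<and>
     ((\<exists>\<mu>. distr M borel Y = return borel \<mu>) \<or>
      (\<exists>\<mu> \<sigma>. \<sigma> > 0 \<and> distributed M lborel Y (normal_density \<mu> \<sigma>)))"

definition complex_gaussian_process ::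
    "'a measure \<Rightarrow> complex set \<Rightarrow> ('a \<Rightarrow> complex \<Rightarrow> complex) \<Rightarrow> bool" where
  "complex_gaussian_process M S Y \<longleftrightarrow>
     (\<forall>z\<in>S. (\<lambda>\<omega>. Y \<omega> z) \<in> borel_measurable M) \<and>
     (\<forall>(m::nat) (zs::nat \<Rightarrow> complex) (a::nat \<Rightarrow> real) (b::nat \<Rightarrow> real).
        (\<forall>k<m. zs k \<in> S) \<longrightarrow>
        real_gaussian_rv M (\<lambda>\<omega>. \<Sum>k<m. a k * Re (Y \<omega> (zs k)) + b k * Im (Y \<omega> (zs k))))"

text \<open>The smooth approximation
  X^eps_t = 2 Re \<integral>_{i eps}^{t + i eps} X'_z dz (taken along the horizontal segment,
  which lies in the upper half plane; by analyticity any path in it gives the same value).\<close>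
definition Xeps :: "(complex \<Rightarrow> complex) \<Rightarrow> real \<Rightarrow> real \<Rightarrow> real" where
  "Xeps Y \<epsilon> t = 2 * Re (contour_integral (linepath (\<i> * of_real \<epsilon>) (of_real t + \<i> * of_real \<epsilon>)) Y)"

definition has_RS_integral :: "(real \<Rightarrow> real) \<Rightarrow> (real \<Rightarrow> real) \<Rightarrow> real \<Rightarrow> real \<Rightarrow> real \<Rightarrow> bool" where
  "has_RS_integral f g a b I \<longleftrightarrow>
     (\<forall>e>0. \<exists>\<delta>>0. \<forall>(p::nat \<Rightarrow> real) (\<xi>::nat \<Rightarrow> real) (m::nat).
        p 0 = a \<and> p m = b \<and>
        (\<forall>k<m. p k < p (Suc k) \<and> p (Suc k) - p k < \<delta> \<and> p k \<le> \<xi> k \<and> \<xi> k \<le> p (Suc k))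
        \<longrightarrow> \<bar>(\<Sum>k<m. f (\<xi> k) * (g (p (Suc k)) - g (p k))) - I\<bar> < e)"

definition RS_integral :: "(real \<Rightarrow> real) \<Rightarrow> (real \<Rightarrow> real) \<Rightarrow> real \<Rightarrow> real \<Rightarrow> real" where
  "RS_integral f g a b = (THE I. has_RS_integral f g a b I)"

definition Pi_rect :: "real \<Rightarrow> real \<Rightarrow> complex set" where
  "Pi_rect s t = {z. s \<le> Re z \<and> Re z \<le> t \<and> -(t - s) \<le> Im z \<and> Im z \<le> t - s}"

definition sup_norm_on :: "(complex \<Rightarrow> complex) \<Rightarrow> complex set \<Rightarrow> real" where
  "sup_norm_on f S = (SUP z\<in>S. cmod (f z))"

end

theory Submission
  imports Defs
begin

text \<open>Since \<open>X\<^sup>\<epsilon>\<close> is smooth with derivative \<open>2 Re X'(u + i\<epsilon>)\<close>, the difference of the two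
  Riemann--Stieltjes integrals is \<open>2 Re \<integral>\<^sub>s\<^sup>t f(z) (X'(z + i\<epsilon>) - X'(z + i\<eta>)) dz\<close>. By Cauchy's theorem
  the real segment can be replaced by the other three sides of the square
  \<open>[s, t] \<times> [0, t - s]\<close>, along which the height above the real axis grows at least like
  \<open>\<tau> (t - s)\<close>. The covariance of \<open>X'\<close> gives
  \<open>E |X'(z + i\<epsilon>) - X'(z + i\<eta>)|\<^sup>2 \<le> c\<^sub>H |\<epsilon> - \<eta>|\<^sup>\<alpha> (Im z + min \<epsilon> \<eta>)\<^bsup>2H - 2 - \<alpha>\<^esup>\<close>,
  and a weighted Cauchy--Schwarz inequality along each side turns this into a bound proportional to
  \<open>\<parallel>f\<parallel>\<^sup>2 |\<epsilon> - \<eta>|\<^sup>\<alpha> (t - s)\<^sup>2 (\<integral>\<^sub>0\<^sup>1 ((t - s) \<tau>)\<^bsup>H - 1 - \<alpha>/2\<^esup> d\<tau>)\<^sup>2\<close>, that is to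
  \<open>\<parallel>f\<parallel>\<^sup>2 |\<epsilon> - \<eta>|\<^sup>\<alpha> (t - s)\<^bsup>2H - \<alpha>\<^esup>\<close>; the integral is finite exactly because \<open>\<alpha> < 2H\<close>.\<close>

section \<open>Riemann--Stieltjes integrals against \<open>C\<^sup>1\<close> integrators\<close>

lemma integral_sum_partition:
  fixes h :: "real \<Rightarrow> real" and p :: "nat \<Rightarrow> real"
  assumes "continuous_on {p 0..p m} h" and "\<forall>k<m. p k < p (Suc k)"
  shows "integral {p 0..p m} h = (\<Sum>k<m. integral {p k..p (Suc k)} h)"
  using assms
proof (induction m)
  case (Suc m)
  have le0: "p 0 \<le> p m"
    by (rule lift_Suc_mono_le_ivl[of "{..<m}"]) (use Suc.prems(2) in \<open>auto simp: less_imp_le\<close>)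
  have leSuc: "p m \<le> p (Suc m)" using Suc.prems(2) by auto
  have "continuous_on {p 0..p m} h"
    using Suc.prems(1) by (rule continuous_on_subset) (use leSuc in auto)
  with Suc have IH: "integral {p 0..p m} h = (\<Sum>k<m. integral {p k..p (Suc k)} h)"
    by auto
  have "h integrable_on {p 0..p (Suc m)}"
    using Suc.prems(1) integrable_continuous_real by blast
  then have "integral {p 0..p m} h + integral {p m..p (Suc m)} h = integral {p 0..p (Suc m)} h"
    by (rule Henstock_Kurzweil_Integration.integral_combine[OF le0 leSuc])
  then show ?case using IH by simp
qed simp

lemma has_RS_integral_unique:
  assumes ab: "a < b" and I: "has_RS_integral \<phi> g a b I" and J: "has_RS_integral \<phi> g a b J"
  shows "I = J"
proof (rule ccontr)
  assume ne: "I \<noteq> J"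
  define e where "e = \<bar>I - J\<bar> / 2"
  have e: "e > 0" using ne by (simp add: e_def)
  obtain d1 where d1: "d1 > 0" and near_I: "\<And>p \<xi> m. p 0 = a \<and> p m = b \<and>
        (\<forall>k<m. p k < p (Suc k) \<and> p (Suc k) - p k < d1 \<and> p k \<le> \<xi> k \<and> \<xi> k \<le> p (Suc k))
        \<Longrightarrow> \<bar>(\<Sum>k<m. \<phi> (\<xi> k) * (g (p (Suc k)) - g (p k))) - I\<bar> < e"
    using I e unfolding has_RS_integral_def by meson
  obtain d2 where d2: "d2 > 0" and near_J: "\<And>p \<xi> m. p 0 = a \<and> p m = b \<and>
        (\<forall>k<m. p k < p (Suc k) \<and> p (Suc k) - p k < d2 \<and> p k \<le> \<xi> k \<and> \<xi> k \<le> p (Suc k))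
        \<Longrightarrow> \<bar>(\<Sum>k<m. \<phi> (\<xi> k) * (g (p (Suc k)) - g (p k))) - J\<bar> < e"
    using J e unfolding has_RS_integral_def by meson
  define d where "d = min d1 d2"
  have d: "d > 0" using d1 d2 by (simp add: d_def)
  obtain m :: nat where m: "(b - a) / d < real m" using reals_Archimedean2 by blast
  have mpos: "real m > 0" using m ab d
    by (metis divide_pos_pos diff_gt_0_iff_gt less_trans)
  define p where "p k = a + real k * (b - a) / real m" for k
  have step: "p (Suc k) - p k = (b - a) / real m" for k
    by (simp add: p_def add_divide_distrib[symmetric] algebra_simps)
  have small: "(b - a) / real m < d"
    using m mpos d ab by (simp add: field_simps)
  have pos: "(b - a) / real m > 0" using ab mpos by simp
  have lt: "p k < p (Suc k)" for k using step[of k] pos by linarith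
  have uniform: "p 0 = a \<and> p m = b \<and>
        (\<forall>k<m. p k < p (Suc k) \<and> p (Suc k) - p k < d \<and> p k \<le> p k \<and> p k \<le> p (Suc k))"
    using step small ab mpos lt by (auto simp: p_def less_imp_le)
  have "\<bar>(\<Sum>k<m. \<phi> (p k) * (g (p (Suc k)) - g (p k))) - I\<bar> < e"
    by (rule near_I) (use uniform d_def in auto)
  moreover have "\<bar>(\<Sum>k<m. \<phi> (p k) * (g (p (Suc k)) - g (p k))) - J\<bar> < e"
    by (rule near_J) (use uniform d_def in auto)
  ultimately show False unfolding e_def by (smt (verit, best) field_sum_of_halves)
qed

text \<open>On \<open>[p k, p (Suc k)]\<close> the Riemann--Stieltjes summand is \<open>\<phi> (\<xi> k) g' (c k) (p (Suc k) - p k)\<close>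
  by the mean value theorem; uniform continuity of \<open>\<phi>\<close> and \<open>g'\<close> makes it close to the integral of
  \<open>\<phi> g'\<close> over that subinterval.\<close>

lemma has_RS_integral_derivative:
  fixes \<phi> g g' :: "real \<Rightarrow> real"
  assumes "a < b" and g': "\<And>u. (g has_real_derivative g' u) (at u)"
    and cont_g': "continuous_on {a..b} g'" and cont_\<phi>: "continuous_on {a..b} \<phi>"
  shows "has_RS_integral \<phi> g a b (integral {a..b} (\<lambda>u. \<phi> u * g' u))"
  unfolding has_RS_integral_def
proof (intro allI impI)
  fix e :: real assume "e > 0"
  obtain B1 where "B1 > 0" and B1: "\<And>x. x \<in> {a..b} \<Longrightarrow> \<bar>\<phi> x\<bar> \<le> B1"
    using compact_imp_bounded[OF compact_continuous_image[OF cont_\<phi> compact_Icc]]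
    unfolding bounded_pos by fastforce
  obtain B2 where "B2 > 0" and B2: "\<And>x. x \<in> {a..b} \<Longrightarrow> \<bar>g' x\<bar> \<le> B2"
    using compact_imp_bounded[OF compact_continuous_image[OF cont_g' compact_Icc]]
    unfolding bounded_pos by fastforce
  define e1 where "e1 = e / (2 * (b - a) * (B1 + B2))"
  have "e1 > 0" using \<open>e > 0\<close> \<open>a < b\<close> \<open>B1 > 0\<close> \<open>B2 > 0\<close> by (simp add: e1_def)
  obtain d1 where "d1 > 0" and d1: "\<And>x x'. x \<in> {a..b} \<Longrightarrow> x' \<in> {a..b} \<Longrightarrow> dist x' x < d1 \<Longrightarrow> dist (\<phi> x') (\<phi> x) < e1"
    using compact_uniformly_continuous[OF cont_\<phi> compact_Icc] \<open>e1 > 0\<close>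
    unfolding uniformly_continuous_on_def by metis
  obtain d2 where "d2 > 0" and d2: "\<And>x x'. x \<in> {a..b} \<Longrightarrow> x' \<in> {a..b} \<Longrightarrow> dist x' x < d2 \<Longrightarrow> dist (g' x') (g' x) < e1"
    using compact_uniformly_continuous[OF cont_g' compact_Icc] \<open>e1 > 0\<close>
    unfolding uniformly_continuous_on_def by metis
  define h where "h u = \<phi> u * g' u" for u
  have cont_h: "continuous_on {a..b} h" unfolding h_def using cont_\<phi> cont_g' by (intro continuous_intros)
  show "\<exists>\<delta>>0. \<forall>p \<xi> m. p 0 = a \<and> p m = b \<and>
        (\<forall>k<m. p k < p (Suc k) \<and> p (Suc k) - p k < \<delta> \<and> p k \<le> \<xi> k \<and> \<xi> k \<le> p (Suc k)) \<longrightarrow>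
        \<bar>(\<Sum>k<m. \<phi> (\<xi> k) * (g (p (Suc k)) - g (p k))) - integral {a..b} (\<lambda>u. \<phi> u * g' u)\<bar> < e"
  proof (intro exI[of _ "min d1 d2"] conjI allI impI)
    show "min d1 d2 > 0" using \<open>d1 > 0\<close> \<open>d2 > 0\<close> by simp
    fix p \<xi> m
    assume P: "p 0 = a \<and> p m = b \<and>
        (\<forall>k<m. p k < p (Suc k) \<and> p (Suc k) - p k < min d1 d2 \<and> p k \<le> \<xi> k \<and> \<xi> k \<le> p (Suc k))"
    have inc: "\<forall>k<m. p k < p (Suc k)" using P by blast
    have p_le: "p i \<le> p j" if "i \<le> j" "j \<le> m" for i j
      by (rule lift_Suc_mono_le_ivl[of "{..<m}"]) (use inc that in \<open>auto simp: less_imp_le\<close>)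
    have p_in: "p k \<in> {a..b}" if "k \<le> m" for k
      using p_le[of 0 k] p_le[of k m] P that by auto
    have "\<exists>c. p k < c \<and> c < p (Suc k) \<and> g (p (Suc k)) - g (p k) = (p (Suc k) - p k) * g' c"
      if "k < m" for k
      using MVT2[of "p k" "p (Suc k)" g g'] g' inc that by blast
    then obtain c where c: "\<And>k. k < m \<Longrightarrow> p k < c k \<and> c k < p (Suc k) \<and>
        g (p (Suc k)) - g (p k) = (p (Suc k) - p k) * g' (c k)"
      by metis
    have piece: "\<bar>\<phi> (\<xi> k) * (g (p (Suc k)) - g (p k)) - integral {p k..p (Suc k)} h\<bar>
        \<le> (B1 + B2) * e1 * (p (Suc k) - p k)" if "k < m" for k
    proof -
      have sub: "{p k..p (Suc k)} \<subseteq> {a..b}" using p_in \<open>k < m\<close> by auto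
      define K where "K = \<phi> (\<xi> k) * g' (c k)"
      have "((\<lambda>u. K) has_integral K * (p (Suc k) - p k)) {p k..p (Suc k)}"
        using has_integral_const_real[of K "p k" "p (Suc k)"] \<open>k < m\<close> inc
        by (simp add: mult.commute less_imp_le)
      then have "((\<lambda>u. K - h u) has_integral (K * (p (Suc k) - p k) - integral {p k..p (Suc k)} h)) {p k..p (Suc k)}"
        using integrable_continuous_real[OF continuous_on_subset[OF cont_h sub]]
        by (intro has_integral_diff) (simp_all add: has_integral_integral)
      moreover have "norm (K - h u) \<le> (B1 + B2) * e1" if u: "u \<in> {p k..p (Suc k)}" for u
      proof -
        have in_ab: "u \<in> {a..b}" "\<xi> k \<in> {a..b}" "c k \<in> {a..b}"
          using u sub P c \<open>k < m\<close> by fastforce+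
        moreover have "dist (\<xi> k) u < d1" "dist (c k) u < d2"
          using P \<open>k < m\<close> u c[OF \<open>k < m\<close>] by (auto simp: dist_real_def)
        ultimately have close: "\<bar>\<phi> (\<xi> k) - \<phi> u\<bar> < e1" "\<bar>g' (c k) - g' u\<bar> < e1"
          using d1 d2 by (auto simp: dist_real_def)
        have "K - h u = \<phi> (\<xi> k) * (g' (c k) - g' u) + g' u * (\<phi> (\<xi> k) - \<phi> u)"
          by (simp add: K_def h_def algebra_simps)
        then have "\<bar>K - h u\<bar> \<le> \<bar>\<phi> (\<xi> k)\<bar> * \<bar>g' (c k) - g' u\<bar> + \<bar>g' u\<bar> * \<bar>\<phi> (\<xi> k) - \<phi> u\<bar>"
          by (metis abs_mult abs_triangle_ineq)
        also have "\<dots> \<le> B1 * e1 + B2 * e1"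
          using B1[OF in_ab(2)] B2[OF in_ab(1)] close by (intro add_mono mult_mono) auto
        finally show ?thesis by (simp add: algebra_simps)
      qed
      ultimately have "norm (K * (p (Suc k) - p k) - integral {p k..p (Suc k)} h)
          \<le> (B1 + B2) * e1 * Henstock_Kurzweil_Integration.content (cbox (p k) (p (Suc k)))"
        using \<open>B1 > 0\<close> \<open>B2 > 0\<close> \<open>e1 > 0\<close> by (intro has_integral_bound) auto
      moreover have "Henstock_Kurzweil_Integration.content (cbox (p k) (p (Suc k))) = p (Suc k) - p k"
        using inc \<open>k < m\<close> by (simp add: less_imp_le)
      moreover have "\<phi> (\<xi> k) * (g (p (Suc k)) - g (p k)) = K * (p (Suc k) - p k)"
        using c[OF \<open>k < m\<close>] by (simp add: K_def)
      ultimately show ?thesis by simp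
    qed
    have "\<bar>(\<Sum>k<m. \<phi> (\<xi> k) * (g (p (Suc k)) - g (p k))) - integral {a..b} h\<bar>
        = \<bar>\<Sum>k<m. \<phi> (\<xi> k) * (g (p (Suc k)) - g (p k)) - integral {p k..p (Suc k)} h\<bar>"
      using integral_sum_partition[of p m h] cont_h inc P by (simp add: sum_subtractf)
    also have "\<dots> \<le> (\<Sum>k<m. (B1 + B2) * e1 * (p (Suc k) - p k))"
      using piece by (intro order_trans[OF sum_abs] sum_mono) auto
    also have "\<dots> = (B1 + B2) * e1 * (b - a)"
      using P by (simp add: sum_distrib_left[symmetric] sum_lessThan_telescope)
    also have "\<dots> = e / 2"
    proof -
      have "(b - a) * (B1 + B2) \<noteq> 0" using \<open>a < b\<close> \<open>B1 > 0\<close> \<open>B2 > 0\<close> by simp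
      moreover have "e1 = e / (2 * ((b - a) * (B1 + B2)))" unfolding e1_def by (simp add: algebra_simps)
      then have "(B1 + B2) * e1 * (b - a) = e / (2 * ((b - a) * (B1 + B2))) * ((b - a) * (B1 + B2))"
        by (simp add: mult_ac)
      ultimately show ?thesis by simp
    qed
    finally show "\<bar>(\<Sum>k<m. \<phi> (\<xi> k) * (g (p (Suc k)) - g (p k))) - integral {a..b} (\<lambda>u. \<phi> u * g' u)\<bar> < e"
      using \<open>e > 0\<close> by (simp add: h_def[abs_def])
  qed
qed

lemma RS_integral_derivative:
  fixes \<phi> g g' :: "real \<Rightarrow> real"
  assumes "a < b" and "\<And>u. (g has_real_derivative g' u) (at u)"
    and "continuous_on {a..b} g'" and "continuous_on {a..b} \<phi>"
  shows "RS_integral \<phi> g a b = integral {a..b} (\<lambda>u. \<phi> u * g' u)"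
  unfolding RS_integral_def
  using has_RS_integral_derivative[OF assms] has_RS_integral_unique[OF \<open>a < b\<close>] by blast

section \<open>The smoothed process and the deformation of the integration path\<close>

lemma convex_upper_half: "convex upper_half"
  unfolding upper_half_def by (rule convex_halfspace_Im_gt)

lemma open_upper_half: "open upper_half"
  unfolding upper_half_def by (rule open_halfspace_Im_gt)

lemma Xeps_has_real_derivative:
  assumes hol: "Y holomorphic_on upper_half" and "\<epsilon> > 0"
  shows "((Xeps Y \<epsilon>) has_real_derivative (2 * Re (Y (of_real u + \<i> * of_real \<epsilon>)))) (at u)"
proof -
  obtain G where G: "\<And>x. x \<in> upper_half \<Longrightarrow> (G has_field_derivative Y x) (at x within upper_half)"
    using holomorphic_convex_primitive'[OF convex_upper_half open_upper_half hol] by blast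
  have G': "(G has_field_derivative Y x) (at x)" if "x \<in> upper_half" for x
    using G[OF that] at_within_open[OF that open_upper_half] by simp
  define c where "c = \<i> * of_real \<epsilon>"
  have c_shift: "of_real v + c \<in> upper_half" for v
    using \<open>\<epsilon> > 0\<close> by (simp add: c_def upper_half_def)
  have Xeps_eq: "Xeps Y \<epsilon> v = 2 * Re (G (of_real v + c) - G c)" for v
  proof -
    have "path_image (linepath c (of_real v + c)) \<subseteq> upper_half"
      using closed_segment_subset[OF _ _ convex_upper_half] c_shift[of 0] c_shift[of v] by simp
    then have "(Y has_contour_integral (G (of_real v + c) - G c)) (linepath c (of_real v + c))"
      using contour_integral_primitive[OF G valid_path_linepath] by simp
    then show ?thesis unfolding Xeps_def c_def by (simp add: contour_integral_unique)
  qed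
  have "((\<lambda>z. G (z + c)) has_field_derivative Y (of_real u + c)) (at (of_real u))"
    using G'[OF c_shift[of u]] DERIV_shift by blast
  then have "((\<lambda>x. G (of_real x + c)) has_vector_derivative Y (of_real u + c)) (at u)"
    using has_vector_derivative_real_field by fastforce
  then have "((\<lambda>x. 2 * Re (G (of_real x + c) - G c)) has_real_derivative 2 * Re (Y (of_real u + c))) (at u)"
    by (auto intro!: derivative_eq_intros)
  then show ?thesis unfolding c_def by (simp add: Xeps_eq[abs_def] c_def)
qed

lemma holomorphic_on_shift_upper_half:
  assumes "Y holomorphic_on upper_half" and "\<And>z. z \<in> S \<Longrightarrow> Im z + e > 0"
  shows "(\<lambda>z. Y (z + \<i> * of_real e)) holomorphic_on S"
proof -
  have "(Y \<circ> (\<lambda>z. z + \<i> * of_real e)) holomorphic_on S"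
    by (rule holomorphic_on_compose[OF _ holomorphic_on_subset[OF assms(1)]])
      (use assms(2) in \<open>auto intro!: holomorphic_intros simp: upper_half_def\<close>)
  then show ?thesis by (simp add: o_def)
qed

lemma Pi_rect_cbox: "Pi_rect s t = cbox (Complex s (-(t - s))) (Complex t (t - s))"
  unfolding Pi_rect_def cbox_complex_eq by auto

lemma analytic_on_compact_convex_imp_holomorphic_nbhd:
  fixes f :: "complex \<Rightarrow> complex"
  assumes "f analytic_on K" and "compact K" and "convex K"
  obtains S where "open S" "convex S" "K \<subseteq> S" "f holomorphic_on S"
proof -
  obtain V where V: "open V" "K \<subseteq> V" "f holomorphic_on V"
    using assms(1) analytic_on_holomorphic by blast
  obtain d where "d > 0" and d: "(\<Union>x\<in>K. ball x d) \<subseteq> V"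
    using compact_subset_open_imp_ball_epsilon_subset[OF assms(2) V(1,2)] by blast
  define S where "S = (\<Union>x\<in>K. \<Union>y\<in>ball 0 d. {x + y})"
  have "S \<subseteq> V"
    using d by (force simp: S_def dist_norm)
  moreover have "K \<subseteq> S"
    using \<open>d > 0\<close> by (force simp: S_def)
  ultimately show ?thesis
    using that[of S] V(3) holomorphic_on_subset open_sums[of K] convex_sums[OF assms(3)]
    by (simp add: S_def)
qed

lemma contour_integral_linepath_detour:
  assumes hol: "h holomorphic_on S" and "convex S" and S: "A \<in> S" "B \<in> S" "C \<in> S" "D \<in> S"
  shows "contour_integral (linepath A D) h
    = contour_integral (linepath A B) h + contour_integral (linepath B C) h - contour_integral (linepath D C) h"
proof -
  have seg: "closed_segment P Q \<subseteq> S" if "P \<in> S" "Q \<in> S" for P Q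
    using closed_segment_subset[OF that \<open>convex S\<close>] .
  have cont: "continuous_on (closed_segment P Q) h" if "P \<in> S" "Q \<in> S" for P Q
    using holomorphic_on_imp_continuous_on[OF holomorphic_on_subset[OF hol seg[OF that]]] .
  have has_ci: "(h has_contour_integral contour_integral (linepath P Q) h) (linepath P Q)"
    if "P \<in> S" "Q \<in> S" for P Q
    using has_contour_integral_integral[OF contour_integrable_continuous_linepath[OF cont[OF that]]] .
  define g where "g = linepath A B +++ (linepath B C +++ (linepath C D +++ linepath D A))"
  have "valid_path g" unfolding g_def by (intro valid_path_join valid_path_linepath) auto
  moreover have "path_image g \<subseteq> S" unfolding g_def using seg S by (simp add: path_image_join)
  moreover have "pathfinish g = pathstart g" unfolding g_def by simp
  ultimately have "(h has_contour_integral 0) g"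
    by (rule Cauchy_theorem_convex_simple[OF hol \<open>convex S\<close>])
  moreover have "(h has_contour_integral (contour_integral (linepath A B) h + (contour_integral (linepath B C) h
        + (contour_integral (linepath C D) h + contour_integral (linepath D A) h)))) g"
    unfolding g_def using S by (intro has_contour_integral_join has_ci valid_path_join valid_path_linepath) auto
  ultimately have "contour_integral (linepath A B) h + (contour_integral (linepath B C) h
        + (contour_integral (linepath C D) h + contour_integral (linepath D A) h)) = 0"
    using has_contour_integral_unique by blast
  moreover have "contour_integral (linepath C D) h = - contour_integral (linepath D C) h"
    "contour_integral (linepath D A) h = - contour_integral (linepath A D) h"
    using contour_integral_reverse_linepath[OF cont[of C D]] contour_integral_reverse_linepath[OF cont[of D A]] S
    by simp_all
  ultimately show ?thesis by (simp add: algebra_simps)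
qed

lemma RS_integral_Xeps_diff_eq_contour_integral:
  fixes Y f :: "complex \<Rightarrow> complex"
  assumes hol: "Y holomorphic_on upper_half"
    and cont_f: "continuous_on (closed_segment (of_real s) (of_real t)) f"
    and real: "\<forall>u\<in>{s..t}. Im (f (of_real u)) = 0" and "s < t" and "\<epsilon> > 0" "\<eta> > 0"
  shows "RS_integral (\<lambda>u. Re (f (of_real u))) (Xeps Y \<epsilon>) s t - RS_integral (\<lambda>u. Re (f (of_real u))) (Xeps Y \<eta>) s t
     = 2 * Re (contour_integral (linepath (of_real s) (of_real t))
                 (\<lambda>z. f z * (Y (z + \<i> * of_real \<epsilon>) - Y (z + \<i> * of_real \<eta>))))"
proof -
  define h where "h z = f z * (Y (z + \<i> * of_real \<epsilon>) - Y (z + \<i> * of_real \<eta>))" for z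
  have segment: "closed_segment (of_real s) (of_real t) = of_real ` {s..t}"
    using \<open>s < t\<close> by (simp add: closed_segment_of_real closed_segment_eq_real_ivl)
  have cont_shift: "continuous_on {z. Im z > - e} (\<lambda>z. Y (z + \<i> * of_real e))" for e
    by (rule holomorphic_on_imp_continuous_on[OF holomorphic_on_shift_upper_half[OF hol]]) auto
  have cont_of_real: "continuous_on {s..t} (\<lambda>u. complex_of_real u)"
    by (intro continuous_intros)
  have cont_Y: "continuous_on {s..t} (\<lambda>u. Y (of_real u + \<i> * of_real e))" if "e > 0" for e
    by (rule continuous_on_compose2[OF cont_shift cont_of_real]) (use that in auto)
  have cont_f': "continuous_on {s..t} (\<lambda>u. f (of_real u))"
    by (rule continuous_on_compose2[OF cont_f cont_of_real]) (simp add: segment)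
  have RS_eq: "RS_integral (\<lambda>u. Re (f (of_real u))) (Xeps Y e) s t
      = integral {s..t} (\<lambda>u. Re (f (of_real u)) * (2 * Re (Y (of_real u + \<i> * of_real e))))"
    if "e > 0" for e
    using cont_Y[OF that] cont_f'
    by (intro RS_integral_derivative[OF \<open>s < t\<close> Xeps_has_real_derivative[OF hol that]] continuous_intros)
  have integrable: "(\<lambda>u. Re (f (of_real u)) * (2 * Re (Y (of_real u + \<i> * of_real e)))) integrable_on {s..t}"
    if "e > 0" for e
    using cont_Y[OF that] cont_f' by (intro integrable_continuous_real continuous_intros)
  have "continuous_on (closed_segment (of_real s) (of_real t)) h"
    unfolding h_def using cont_f
    by (intro continuous_intros continuous_on_subset[OF cont_shift]) (use \<open>\<epsilon> > 0\<close> \<open>\<eta> > 0\<close> in \<open>auto simp: segment\<close>)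
  then have "(h has_contour_integral contour_integral (linepath (of_real s) (of_real t)) h) (linepath (of_real s) (of_real t))"
    by (intro has_contour_integral_integral contour_integrable_continuous_linepath)
  then have "((\<lambda>u. h (of_real u)) has_integral contour_integral (linepath (of_real s) (of_real t)) h) {s..t}"
    using has_contour_integral_linepath_Reals_iff[of "of_real s" "of_real t" h] \<open>s < t\<close> by simp
  then have "((\<lambda>u. Re (h (of_real u))) has_integral Re (contour_integral (linepath (of_real s) (of_real t)) h)) {s..t}"
    using has_integral_linear[OF _ bounded_linear_Re] by (simp add: o_def)
  then have integral_h: "integral {s..t} (\<lambda>u. 2 * Re (h (of_real u)))
      = 2 * Re (contour_integral (linepath (of_real s) (of_real t)) h)"
    by (simp add: integral_mult_right integral_unique)
  have "RS_integral (\<lambda>u. Re (f (of_real u))) (Xeps Y \<epsilon>) s t - RS_integral (\<lambda>u. Re (f (of_real u))) (Xeps Y \<eta>) s t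
      = integral {s..t} (\<lambda>u. Re (f (of_real u)) * (2 * Re (Y (of_real u + \<i> * of_real \<epsilon>)))
          - Re (f (of_real u)) * (2 * Re (Y (of_real u + \<i> * of_real \<eta>))))"
    using RS_eq[OF \<open>\<epsilon> > 0\<close>] RS_eq[OF \<open>\<eta> > 0\<close>]
      integral_diff[OF integrable[OF \<open>\<epsilon> > 0\<close>] integrable[OF \<open>\<eta> > 0\<close>]] by simp
  also have "\<dots> = integral {s..t} (\<lambda>u. 2 * Re (h (of_real u)))"
    by (rule integral_cong) (use real in \<open>auto simp: h_def algebra_simps\<close>)
  finally show ?thesis using integral_h by (simp add: h_def[abs_def])
qed

lemma RS_integral_Xeps_diff_eq_sides:
  fixes Y f :: "complex \<Rightarrow> complex"
  assumes hol: "Y holomorphic_on upper_half" and an: "f analytic_on Pi_rect s t"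
    and real: "\<forall>u\<in>{s..t}. Im (f (of_real u)) = 0" and "s < t" and "\<epsilon> > 0" "\<eta> > 0"
  shows "RS_integral (\<lambda>u. Re (f (of_real u))) (Xeps Y \<epsilon>) s t - RS_integral (\<lambda>u. Re (f (of_real u))) (Xeps Y \<eta>) s t
     = 2 * Re (contour_integral (linepath (of_real s) (of_real s + \<i> * of_real (t - s))) (\<lambda>z. f z * (Y (z + \<i> * of_real \<epsilon>) - Y (z + \<i> * of_real \<eta>)))
             + contour_integral (linepath (of_real s + \<i> * of_real (t - s)) (of_real t + \<i> * of_real (t - s))) (\<lambda>z. f z * (Y (z + \<i> * of_real \<epsilon>) - Y (z + \<i> * of_real \<eta>)))
             - contour_integral (linepath (of_real t) (of_real t + \<i> * of_real (t - s))) (\<lambda>z. f z * (Y (z + \<i> * of_real \<epsilon>) - Y (z + \<i> * of_real \<eta>))))"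
proof -
  define h where "h z = f z * (Y (z + \<i> * of_real \<epsilon>) - Y (z + \<i> * of_real \<eta>))" for z
  define m where "m = min \<epsilon> \<eta>"
  have "compact (Pi_rect s t)" "convex (Pi_rect s t)" by (simp_all add: Pi_rect_cbox convex_box)
  then obtain S0 where "open S0" "convex S0" "Pi_rect s t \<subseteq> S0" and hol_f: "f holomorphic_on S0"
    using analytic_on_compact_convex_imp_holomorphic_nbhd[OF an] by blast
  define S where "S = S0 \<inter> {z. Im z > - m}"
  have "convex S" unfolding S_def using \<open>convex S0\<close> by (intro convex_Int convex_halfspace_Im_gt)
  have "\<forall>z\<in>S. Im z + \<epsilon> > 0" "\<forall>z\<in>S. Im z + \<eta> > 0" unfolding S_def m_def by auto
  then have "h holomorphic_on S"
    unfolding h_def S_def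
    by (intro holomorphic_intros holomorphic_on_subset[OF hol_f] holomorphic_on_shift_upper_half[OF hol])
      (auto simp: S_def)
  have in_S: "z \<in> S" if "z \<in> Pi_rect s t" "Im z \<ge> 0" for z
    using that \<open>Pi_rect s t \<subseteq> S0\<close> \<open>\<epsilon> > 0\<close> \<open>\<eta> > 0\<close> by (auto simp: S_def m_def)
  have corners: "of_real s \<in> Pi_rect s t" "of_real s + \<i> * of_real (t - s) \<in> Pi_rect s t"
    "of_real t + \<i> * of_real (t - s) \<in> Pi_rect s t" "of_real t \<in> Pi_rect s t"
    using \<open>s < t\<close> by (auto simp: Pi_rect_def)
  have "closed_segment (of_real s) (of_real t) \<subseteq> Pi_rect s t"
    using closed_segment_subset[OF corners(1,4) \<open>convex (Pi_rect s t)\<close>] .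
  then have "continuous_on (closed_segment (of_real s) (of_real t)) f"
    using holomorphic_on_imp_continuous_on[OF hol_f] \<open>Pi_rect s t \<subseteq> S0\<close> continuous_on_subset by blast
  then have "RS_integral (\<lambda>u. Re (f (of_real u))) (Xeps Y \<epsilon>) s t - RS_integral (\<lambda>u. Re (f (of_real u))) (Xeps Y \<eta>) s t
      = 2 * Re (contour_integral (linepath (of_real s) (of_real t)) h)"
    unfolding h_def by (rule RS_integral_Xeps_diff_eq_contour_integral[OF hol _ real \<open>s < t\<close> \<open>\<epsilon> > 0\<close> \<open>\<eta> > 0\<close>])
  also have "contour_integral (linepath (of_real s) (of_real t)) h
      = contour_integral (linepath (of_real s) (of_real s + \<i> * of_real (t - s))) h
        + contour_integral (linepath (of_real s + \<i> * of_real (t - s)) (of_real t + \<i> * of_real (t - s))) h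
        - contour_integral (linepath (of_real t) (of_real t + \<i> * of_real (t - s))) h"
    using corners \<open>s < t\<close>
    by (intro contour_integral_linepath_detour[OF \<open>h holomorphic_on S\<close> \<open>convex S\<close>] in_S) auto
  finally show ?thesis unfolding h_def .
qed

section \<open>Second moments of the increments\<close>

lemma le_powr_interpolation:
  fixes P Q \<alpha> :: real
  assumes "P \<ge> 0" "Q \<ge> 0" "0 < \<alpha>" "\<alpha> < 1" "x \<le> P" "x \<le> Q"
  shows "x \<le> P powr (1 - \<alpha>) * Q powr \<alpha>"
proof (cases "P \<le> Q")
  case True
  have "x \<le> P" by fact
  also have "P = P powr (1 - \<alpha>) * P powr \<alpha>"
    using assms by (cases "P = 0") (auto simp: powr_add[symmetric])
  also have "\<dots> \<le> P powr (1 - \<alpha>) * Q powr \<alpha>"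
    using True assms by (intro mult_left_mono powr_mono2) auto
  finally show ?thesis .
next
  case False
  have "x \<le> Q" by fact
  also have "Q = Q powr (1 - \<alpha>) * Q powr \<alpha>"
    using assms by (cases "Q = 0") (auto simp: powr_add[symmetric])
  also have "\<dots> \<le> P powr (1 - \<alpha>) * Q powr \<alpha>"
    using False assms by (intro mult_right_mono powr_mono2) auto
  finally show ?thesis .
qed

lemma powr_diff_le_derivative_bound:
  fixes a m \<beta> :: real
  assumes "0 < a" "a \<le> m" "\<beta> < 0"
  shows "a powr \<beta> - m powr \<beta> \<le> - \<beta> * a powr (\<beta> - 1) * (m - a)"
proof (cases "a = m")
  case False
  then have "a < m" using assms by simp
  have "\<And>x. a \<le> x \<Longrightarrow> x \<le> m \<Longrightarrow> ((\<lambda>x. x powr \<beta>) has_real_derivative \<beta> * x powr (\<beta> - 1)) (at x)"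
    using assms by (auto intro!: derivative_eq_intros)
  from MVT2[OF \<open>a < m\<close> this] obtain z
    where z: "a < z" "z < m" "m powr \<beta> - a powr \<beta> = (m - a) * (\<beta> * z powr (\<beta> - 1))"
    by blast
  have "z powr (\<beta> - 1) \<le> a powr (\<beta> - 1)"
    using z assms by (intro powr_mono2') auto
  then have "- \<beta> * z powr (\<beta> - 1) * (m - a) \<le> - \<beta> * a powr (\<beta> - 1) * (m - a)"
    using assms \<open>a < m\<close> by (intro mult_right_mono mult_left_mono) auto
  then show ?thesis using z by (simp add: algebra_simps)
qed simp

text \<open>The second difference is at most \<open>a\<^sup>\<beta>\<close> and, by the mean value theorem, at most
  \<open>(b - a) a\<^bsup>\<beta> - 1\<^esup>\<close>; interpolating between the two bounds gives the claim.\<close>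

lemma powr_second_difference_le:
  fixes a b \<beta> \<alpha> :: real
  assumes "0 < a" "a \<le> b" and \<beta>: "-2 \<le> \<beta>" "\<beta> < 0" and \<alpha>: "0 < \<alpha>" "\<alpha> < 1"
  shows "(2 * a) powr \<beta> + (2 * b) powr \<beta> - 2 * (a + b) powr \<beta> \<le> (b - a) powr \<alpha> * a powr (\<beta> - \<alpha>)"
proof -
  define m where "m = (a + b) / 2"
  have am: "a \<le> m" "m \<le> b" "0 < m" using assms by (auto simp: m_def)
  define D where "D = a powr \<beta> + b powr \<beta> - 2 * m powr \<beta>"
  have scale: "(2 * a) powr \<beta> + (2 * b) powr \<beta> - 2 * (a + b) powr \<beta> = 2 powr \<beta> * D"
  proof -
    have "a + b = 2 * m" by (simp add: m_def)
    then show ?thesis using assms am by (simp add: D_def powr_mult algebra_simps)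
  qed
  have bm: "b powr \<beta> \<le> m powr \<beta>" using am \<beta> by (intro powr_mono2') auto
  have D_le1: "D \<le> a powr \<beta>"
    using bm unfolding D_def by (smt (verit) powr_ge_zero)
  have "D \<le> a powr \<beta> - m powr \<beta>" using bm by (simp add: D_def)
  also have "\<dots> \<le> - \<beta> * a powr (\<beta> - 1) * (m - a)"
    using powr_diff_le_derivative_bound[OF \<open>0 < a\<close> am(1) \<beta>(2)] .
  also have "\<dots> \<le> (b - a) * a powr (\<beta> - 1)"
  proof -
    have "m - a = (b - a) / 2" by (simp add: m_def field_simps)
    then have "- \<beta> * (m - a) = (b - a) - (2 + \<beta>) * (b - a) / 2" by (simp add: field_simps)
    moreover have "0 \<le> (2 + \<beta>) * (b - a)" using \<beta> assms by simp
    ultimately have "- \<beta> * (m - a) \<le> b - a" by linarith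
    then show ?thesis using mult_right_mono[of "- \<beta> * (m - a)" "b - a" "a powr (\<beta> - 1)"] by (simp add: mult_ac)
  qed
  finally have D_le2: "D \<le> (b - a) * a powr (\<beta> - 1)" .
  have "max 0 D \<le> (a powr \<beta>) powr (1 - \<alpha>) * ((b - a) * a powr (\<beta> - 1)) powr \<alpha>"
    using le_powr_interpolation[of "a powr \<beta>" "(b - a) * a powr (\<beta> - 1)" \<alpha> "max 0 D"] D_le1 D_le2 \<alpha> assms
    by auto
  also have "\<dots> = (b - a) powr \<alpha> * a powr (\<beta> * (1 - \<alpha>) + (\<beta> - 1) * \<alpha>)"
    using assms by (simp add: powr_powr powr_mult powr_add mult_ac)
  also have "\<beta> * (1 - \<alpha>) + (\<beta> - 1) * \<alpha> = \<beta> - \<alpha>" by (simp add: algebra_simps)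
  finally have D_le: "max 0 D \<le> (b - a) powr \<alpha> * a powr (\<beta> - \<alpha>)" .
  have "2 powr \<beta> \<le> 2 powr (0::real)" using \<beta> by (intro powr_mono) auto
  then have "2 powr \<beta> \<le> 1" by simp
  then have "2 powr \<beta> * D \<le> max 0 D"
    by (cases "D \<ge> 0") (auto simp: mult_nonneg_nonpos intro: mult_left_le_one_le)
  then show ?thesis using scale D_le by linarith
qed

lemma cH_pos:
  assumes "0 < H" "H < 1/2"
  shows "cH H > 0"
proof -
  have "0 < pi * H" "pi * H < pi / 2" using assms by (simp_all add: field_simps)
  then have "cos (pi * H) > 0" by (intro cos_gt_zero_pi) linarith+
  then show ?thesis using assms by (simp add: cH_def)
qed

definition variance_bound :: "real \<Rightarrow> real \<Rightarrow> real \<Rightarrow> real \<Rightarrow> real \<Rightarrow> real" where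
  "variance_bound H \<alpha> \<epsilon> \<eta> y = cH H * \<bar>\<epsilon> - \<eta>\<bar> powr \<alpha> * (y + min \<epsilon> \<eta>) powr (2 * H - 2 - \<alpha>)"

text \<open>With \<open>a = Im z + min \<epsilon> \<eta>\<close> and \<open>b = Im z + max \<epsilon> \<eta>\<close> the covariance turns the second moment into
  \<open>c\<^sub>H\<close> times the second difference \<open>(2a)\<^sup>\<beta> + (2b)\<^sup>\<beta> - 2(a + b)\<^sup>\<beta>\<close>, \<open>\<beta> = 2H - 2\<close>.\<close>

lemma second_moment_vertical_increment_le:
  fixes Z :: "'a \<Rightarrow> complex \<Rightarrow> complex" and M :: "'a measure"
  assumes cov: "\<And>z w. z \<in> upper_half \<Longrightarrow> w \<in> upper_half \<Longrightarrow>
        integrable M (\<lambda>\<omega>. Z \<omega> z * cnj (Z \<omega> w)) \<and>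
        (\<integral>\<omega>. Z \<omega> z * cnj (Z \<omega> w) \<partial>M)
          = of_real (cH H) * (- \<i> * (z - cnj w)) powr (of_real (2 * H - 2))"
    and H: "0 < H" "H < 1/2" and \<alpha>: "0 < \<alpha>" "\<alpha> < 1"
    and "Im z \<ge> 0" and "\<epsilon> > 0" "\<eta> > 0"
  shows "(\<integral>\<^sup>+\<omega>. ennreal ((cmod (Z \<omega> (z + \<i> * of_real \<epsilon>) - Z \<omega> (z + \<i> * of_real \<eta>)))\<^sup>2) \<partial>M)
     \<le> ennreal (variance_bound H \<alpha> \<epsilon> \<eta> (Im z))"
proof -
  define z1 where "z1 = z + \<i> * of_real \<epsilon>"
  define z2 where "z2 = z + \<i> * of_real \<eta>"
  define \<beta> where "\<beta> = 2 * H - 2"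
  have in_upper: "z1 \<in> upper_half" "z2 \<in> upper_half"
    using \<open>Im z \<ge> 0\<close> \<open>\<epsilon> > 0\<close> \<open>\<eta> > 0\<close> by (auto simp: z1_def z2_def upper_half_def)
  define k where "k a b \<omega> = Z \<omega> a * cnj (Z \<omega> b)" for a b \<omega>
  have integrable_k: "integrable M (k a b)" if "a \<in> upper_half" "b \<in> upper_half" for a b
    using cov[OF that] unfolding k_def by blast
  have expectation_k: "(\<integral>\<omega>. k (z + \<i> * of_real e1) (z + \<i> * of_real e2) \<omega> \<partial>M)
      = of_real (cH H * (2 * Im z + e1 + e2) powr \<beta>)" if "e1 > 0" "e2 > 0" for e1 e2
  proof -
    have "z + \<i> * of_real e1 \<in> upper_half" "z + \<i> * of_real e2 \<in> upper_half"
      using \<open>Im z \<ge> 0\<close> that by (auto simp: upper_half_def)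
    moreover have "- \<i> * ((z + \<i> * of_real e1) - cnj (z + \<i> * of_real e2)) = of_real (2 * Im z + e1 + e2)"
      by (simp add: complex_eq_iff)
    ultimately have "(\<integral>\<omega>. k (z + \<i> * of_real e1) (z + \<i> * of_real e2) \<omega> \<partial>M)
        = of_real (cH H) * (of_real (2 * Im z + e1 + e2)) powr (of_real \<beta>)"
      using cov unfolding k_def \<beta>_def by simp
    also have "\<dots> = of_real (cH H * (2 * Im z + e1 + e2) powr \<beta>)"
      using \<open>Im z \<ge> 0\<close> that by (subst powr_of_real) auto
    finally show ?thesis .
  qed
  define W where "W \<omega> = Z \<omega> z1 - Z \<omega> z2" for \<omega>
  have sq: "(cmod (W \<omega>))\<^sup>2 = Re (k z1 z1 \<omega> - k z1 z2 \<omega> - k z2 z1 \<omega> + k z2 z2 \<omega>)" for \<omega>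
  proof -
    have "of_real ((cmod (W \<omega>))\<^sup>2) = W \<omega> * cnj (W \<omega>)" by (rule complex_norm_square)
    also have "\<dots> = k z1 z1 \<omega> - k z1 z2 \<omega> - k z2 z1 \<omega> + k z2 z2 \<omega>"
      by (simp add: W_def k_def algebra_simps)
    finally show ?thesis by (metis Re_complex_of_real)
  qed
  have integrable_sum: "integrable M (\<lambda>\<omega>. k z1 z1 \<omega> - k z1 z2 \<omega> - k z2 z1 \<omega> + k z2 z2 \<omega>)"
    using integrable_k in_upper by auto
  have "integrable M (\<lambda>\<omega>. (cmod (W \<omega>))\<^sup>2)"
    unfolding sq using integrable_Re[OF integrable_sum] .
  then have "(\<integral>\<^sup>+\<omega>. ennreal ((cmod (W \<omega>))\<^sup>2) \<partial>M) = ennreal (\<integral>\<omega>. (cmod (W \<omega>))\<^sup>2 \<partial>M)"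
    by (rule nn_integral_eq_integral) auto
  also have "(\<integral>\<omega>. (cmod (W \<omega>))\<^sup>2 \<partial>M) = Re (\<integral>\<omega>. k z1 z1 \<omega> - k z1 z2 \<omega> - k z2 z1 \<omega> + k z2 z2 \<omega> \<partial>M)"
    unfolding sq by (rule integral_Re[OF integrable_sum])
  also have "(\<integral>\<omega>. k z1 z1 \<omega> - k z1 z2 \<omega> - k z2 z1 \<omega> + k z2 z2 \<omega> \<partial>M)
      = (\<integral>\<omega>. k z1 z1 \<omega> \<partial>M) - (\<integral>\<omega>. k z1 z2 \<omega> \<partial>M) - (\<integral>\<omega>. k z2 z1 \<omega> \<partial>M) + (\<integral>\<omega>. k z2 z2 \<omega> \<partial>M)"
    using integrable_k in_upper by simp
  also have "\<dots> = of_real (cH H * (2 * Im z + \<epsilon> + \<epsilon>) powr \<beta>) - of_real (cH H * (2 * Im z + \<epsilon> + \<eta>) powr \<beta>)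
       - of_real (cH H * (2 * Im z + \<eta> + \<epsilon>) powr \<beta>) + of_real (cH H * (2 * Im z + \<eta> + \<eta>) powr \<beta>)"
    unfolding z1_def z2_def using expectation_k \<open>\<epsilon> > 0\<close> \<open>\<eta> > 0\<close> by simp
  finally have second_moment: "(\<integral>\<^sup>+\<omega>. ennreal ((cmod (W \<omega>))\<^sup>2) \<partial>M)
      = ennreal (cH H * ((2 * Im z + 2 * \<epsilon>) powr \<beta> + (2 * Im z + 2 * \<eta>) powr \<beta> - 2 * (2 * Im z + \<epsilon> + \<eta>) powr \<beta>))"
    by (simp add: algebra_simps)
  define a where "a = Im z + min \<epsilon> \<eta>"
  define b where "b = Im z + max \<epsilon> \<eta>"
  have "0 < a" "a \<le> b" using \<open>Im z \<ge> 0\<close> \<open>\<epsilon> > 0\<close> \<open>\<eta> > 0\<close> by (auto simp: a_def b_def)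
  moreover have "-2 \<le> \<beta>" "\<beta> < 0" using H by (auto simp: \<beta>_def)
  ultimately have "(2 * a) powr \<beta> + (2 * b) powr \<beta> - 2 * (a + b) powr \<beta> \<le> (b - a) powr \<alpha> * a powr (\<beta> - \<alpha>)"
    using \<alpha> by (intro powr_second_difference_le)
  moreover have "(2 * Im z + 2 * \<epsilon>) powr \<beta> + (2 * Im z + 2 * \<eta>) powr \<beta> - 2 * (2 * Im z + \<epsilon> + \<eta>) powr \<beta>
      = (2 * a) powr \<beta> + (2 * b) powr \<beta> - 2 * (a + b) powr \<beta>"
    by (cases "\<epsilon> \<le> \<eta>") (auto simp: a_def b_def algebra_simps max_def min_def)
  moreover have "b - a = \<bar>\<epsilon> - \<eta>\<bar>" by (auto simp: a_def b_def max_def min_def)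
  ultimately have "cH H * ((2 * Im z + 2 * \<epsilon>) powr \<beta> + (2 * Im z + 2 * \<eta>) powr \<beta> - 2 * (2 * Im z + \<epsilon> + \<eta>) powr \<beta>)
      \<le> cH H * (\<bar>\<epsilon> - \<eta>\<bar> powr \<alpha> * a powr (\<beta> - \<alpha>))"
    using cH_pos[OF H] by (intro mult_left_mono) auto
  then show ?thesis
    unfolding second_moment[unfolded W_def z1_def z2_def] variance_bound_def a_def \<beta>_def
    by (intro ennreal_leI) (simp add: mult_ac)
qed

section \<open>Bounds along the sides of the rectangle\<close>

lemma LIMSEQ_floor_grid: "(\<lambda>k. real_of_int \<lfloor>x * real (Suc k)\<rfloor> / real (Suc k)) \<longlonglongrightarrow> x"
proof (rule tendsto_sandwich[of "\<lambda>k. x - 1 / real (Suc k)" _ _ "\<lambda>k. x"])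
  show "\<forall>\<^sub>F k in sequentially. x - 1 / real (Suc k) \<le> real_of_int \<lfloor>x * real (Suc k)\<rfloor> / real (Suc k)"
  proof (intro always_eventually allI)
    fix k
    have "(x * real (Suc k) - 1) / real (Suc k) \<le> real_of_int \<lfloor>x * real (Suc k)\<rfloor> / real (Suc k)"
      by (intro divide_right_mono) linarith+
    then show "x - 1 / real (Suc k) \<le> real_of_int \<lfloor>x * real (Suc k)\<rfloor> / real (Suc k)"
      by (simp add: diff_divide_distrib)
  qed
  show "\<forall>\<^sub>F k in sequentially. real_of_int \<lfloor>x * real (Suc k)\<rfloor> / real (Suc k) \<le> x"
    by (intro always_eventually allI) (simp add: field_simps)
  have "(\<lambda>k. 1 / real (Suc k)) \<longlonglongrightarrow> 0"
    using LIMSEQ_inverse_real_of_nat by (simp add: inverse_eq_divide)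
  then show "(\<lambda>k. x - 1 / real (Suc k)) \<longlonglongrightarrow> x"
    using tendsto_diff[of "\<lambda>_. x" x] by force
qed simp

text \<open>Joint measurability in \<open>(\<omega>, \<tau>)\<close> comes from approximating \<open>\<tau>\<close> by grid points, where only
  countably many of the measurable maps \<open>\<lambda>\<omega>. Z \<omega> z\<close> are involved, and continuity of the paths.\<close>

lemma borel_measurable_process_along_path:
  fixes Z :: "'a \<Rightarrow> complex \<Rightarrow> complex" and g :: "real \<Rightarrow> complex"
  assumes meas: "\<And>z. z \<in> U \<Longrightarrow> (\<lambda>\<omega>. Z \<omega> z) \<in> borel_measurable M"
    and cont: "\<And>\<omega>. \<omega> \<in> space M \<Longrightarrow> continuous_on U (Z \<omega>)"
    and "continuous_on UNIV g" and g_in: "\<And>\<tau>. g \<tau> \<in> U"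
  shows "(\<lambda>x. Z (fst x) (g (snd x))) \<in> borel_measurable (M \<Otimes>\<^sub>M lborel)"
proof (rule borel_measurable_LIMSEQ_metric)
  fix k :: nat
  show "(\<lambda>x. Z (fst x) (g (real_of_int \<lfloor>snd x * real (Suc k)\<rfloor> / real (Suc k)))) \<in> borel_measurable (M \<Otimes>\<^sub>M lborel)"
  proof (rule measurable_compose_countable[where f="\<lambda>i x. Z (fst x) (g (real_of_int i / real (Suc k)))"
        and g="\<lambda>x. \<lfloor>snd x * real (Suc k)\<rfloor>"])
    fix i :: int
    show "(\<lambda>x. Z (fst x) (g (real_of_int i / real (Suc k)))) \<in> borel_measurable (M \<Otimes>\<^sub>M lborel)"
      using measurable_compose[OF measurable_fst meas[OF g_in]] by simp
  qed measurable
next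
  fix x :: "'a \<times> real" assume "x \<in> space (M \<Otimes>\<^sub>M lborel)"
  then have "fst x \<in> space M" by (auto simp: space_pair_measure)
  have lim_g: "(\<lambda>k. g (real_of_int \<lfloor>snd x * real (Suc k)\<rfloor> / real (Suc k))) \<longlonglongrightarrow> g (snd x)"
    using continuous_on_tendsto_compose[OF \<open>continuous_on UNIV g\<close> LIMSEQ_floor_grid] by simp
  show "(\<lambda>k. Z (fst x) (g (real_of_int \<lfloor>snd x * real (Suc k)\<rfloor> / real (Suc k)))) \<longlonglongrightarrow> Z (fst x) (g (snd x))"
    using continuous_on_tendsto_compose[OF cont[OF \<open>fst x \<in> space M\<close>] lim_g g_in] g_in by simp
qed

lemma nn_integral_weighted_Cauchy_Schwarz:
  fixes V w :: "real \<Rightarrow> real"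
  assumes [measurable]: "S \<in> sets borel" "V \<in> borel_measurable borel" "w \<in> borel_measurable borel"
    and V_nonneg: "\<And>\<tau>. \<tau> \<in> S \<Longrightarrow> V \<tau> \<ge> 0" and w_pos: "\<And>\<tau>. w \<tau> > 0"
  shows "(\<integral>\<^sup>+\<tau>. ennreal (indicator S \<tau> * V \<tau>) \<partial>lborel)\<^sup>2
    \<le> (\<integral>\<^sup>+\<tau>. ennreal (indicator S \<tau> * w \<tau>) \<partial>lborel)
      * (\<integral>\<^sup>+\<tau>. ennreal (indicator S \<tau> * ((V \<tau>)\<^sup>2 / w \<tau>)) \<partial>lborel)"
proof -
  define f1 where "f1 \<tau> = ennreal (indicator S \<tau> * sqrt (w \<tau>))" for \<tau>
  define g1 where "g1 \<tau> = ennreal (indicator S \<tau> * (V \<tau> / sqrt (w \<tau>)))" for \<tau>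
  have "f1 \<in> borel_measurable lborel" "g1 \<in> borel_measurable lborel"
    unfolding f1_def g1_def by measurable
  moreover have "f1 \<tau> * g1 \<tau> = ennreal (indicator S \<tau> * V \<tau>)" for \<tau>
    using w_pos[of \<tau>] V_nonneg[of \<tau>] unfolding f1_def g1_def
    by (auto simp: indicator_def ennreal_mult[symmetric])
  moreover have "f1 \<tau> ^ 2 = ennreal (indicator S \<tau> * w \<tau>)" for \<tau>
    using w_pos[of \<tau>] unfolding f1_def by (auto simp: indicator_def ennreal_power)
  moreover have "g1 \<tau> ^ 2 = ennreal (indicator S \<tau> * ((V \<tau>)\<^sup>2 / w \<tau>))" for \<tau>
    using w_pos[of \<tau>] V_nonneg[of \<tau>] unfolding g1_def
    by (auto simp: indicator_def ennreal_power power_divide)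
  ultimately show ?thesis using Cauchy_Schwarz_nn_integral[of f1 lborel g1] by simp
qed

lemma norm_contour_integral_linepath_sq_le:
  fixes h :: "complex \<Rightarrow> complex" and V w :: "real \<Rightarrow> real"
  assumes cont_h: "continuous_on (closed_segment P Q) h" and cont_V: "continuous_on UNIV V"
    and bound: "\<And>\<tau>. \<tau> \<in> {0..1} \<Longrightarrow> cmod (h (linepath P Q \<tau>)) \<le> V \<tau>"
    and w: "w \<in> borel_measurable borel" "\<And>\<tau>. w \<tau> > 0"
  shows "ennreal ((cmod (contour_integral (linepath P Q) h))\<^sup>2)
    \<le> ennreal ((cmod (Q - P))\<^sup>2) * (\<integral>\<^sup>+\<tau>. ennreal (indicator {0..1} \<tau> * w \<tau>) \<partial>lborel)
        * (\<integral>\<^sup>+\<tau>. ennreal (indicator {0..1} \<tau> * ((V \<tau>)\<^sup>2 / w \<tau>)) \<partial>lborel)"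
proof -
  have V_nonneg: "V \<tau> \<ge> 0" if "\<tau> \<in> {0..1}" for \<tau>
    using bound[OF that] norm_ge_zero order_trans by blast
  have cont_V01: "continuous_on {0..1} V" using cont_V continuous_on_subset by blast
  have [measurable]: "V \<in> borel_measurable borel" "w \<in> borel_measurable borel"
    using cont_V borel_measurable_continuous_onI w(1) by blast+
  have "(h has_contour_integral contour_integral (linepath P Q) h) (linepath P Q)"
    using has_contour_integral_integral[OF contour_integrable_continuous_linepath[OF cont_h]] .
  then have "((\<lambda>x. h (linepath P Q x) * (Q - P)) has_integral contour_integral (linepath P Q) h) {0..1}"
    by (simp add: has_contour_integral_linepath)
  then have ci: "contour_integral (linepath P Q) h = integral {0..1} (\<lambda>x. h (linepath P Q x) * (Q - P))"
    by (rule integral_unique[symmetric])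
  have "continuous_on {0..1} (linepath P Q)" by (rule continuous_on_linepath)
  moreover have "linepath P Q ` {0..1} \<subseteq> closed_segment P Q" by (simp add: linepath_image_01)
  ultimately have "continuous_on {0..1} (h \<circ> linepath P Q)"
    using continuous_on_compose continuous_on_subset cont_h by blast
  then have integrand: "(\<lambda>x. h (linepath P Q x) * (Q - P)) integrable_on {0..1}"
    by (intro integrable_continuous_real continuous_intros) (simp add: o_def)
  define I where "I = integral {0..1} V"
  have "I \<ge> 0" unfolding I_def using V_nonneg by (intro integral_nonneg integrable_continuous_real cont_V01) auto
  have "cmod (contour_integral (linepath P Q) h) \<le> integral {0..1} (\<lambda>x. cmod (Q - P) * V x)"
    unfolding ci
  proof (rule integral_norm_bound_integral[OF integrand])
    show "(\<lambda>x. cmod (Q - P) * V x) integrable_on {0..1}"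
      using cont_V01 by (intro integrable_continuous_real continuous_intros)
    show "norm (h (linepath P Q x) * (Q - P)) \<le> cmod (Q - P) * V x" if "x \<in> {0..1}" for x
      using mult_left_mono[OF bound[OF that], of "cmod (Q - P)"] by (simp add: norm_mult mult.commute)
  qed
  then have "cmod (contour_integral (linepath P Q) h) \<le> cmod (Q - P) * I" by (simp add: I_def)
  then have "(cmod (contour_integral (linepath P Q) h))\<^sup>2 \<le> (cmod (Q - P))\<^sup>2 * I\<^sup>2"
    by (metis norm_ge_zero power_mono power_mult_distrib)
  then have "ennreal ((cmod (contour_integral (linepath P Q) h))\<^sup>2) \<le> ennreal ((cmod (Q - P))\<^sup>2 * I\<^sup>2)"
    by (rule ennreal_leI)
  also have "\<dots> = ennreal ((cmod (Q - P))\<^sup>2) * (ennreal I)\<^sup>2"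
    using \<open>I \<ge> 0\<close> by (simp add: ennreal_mult ennreal_power)
  finally have sq_bound: "ennreal ((cmod (contour_integral (linepath P Q) h))\<^sup>2) \<le> ennreal ((cmod (Q - P))\<^sup>2) * (ennreal I)\<^sup>2" .
  have I_eq: "ennreal I = (\<integral>\<^sup>+\<tau>. ennreal (indicator {0..1} \<tau> * V \<tau>) \<partial>lborel)"
    using nn_integral_has_integral_lebesgue[of "{0..1}" V I] V_nonneg
      integrable_integral[OF integrable_continuous_real[OF cont_V01]] unfolding I_def by simp
  have Cauchy_Schwarz: "(\<integral>\<^sup>+\<tau>. ennreal (indicator {0..1} \<tau> * V \<tau>) \<partial>lborel)\<^sup>2
      \<le> (\<integral>\<^sup>+\<tau>. ennreal (indicator {0..1} \<tau> * w \<tau>) \<partial>lborel)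
        * (\<integral>\<^sup>+\<tau>. ennreal (indicator {0..1} \<tau> * ((V \<tau>)\<^sup>2 / w \<tau>)) \<partial>lborel)"
    using V_nonneg w by (intro nn_integral_weighted_Cauchy_Schwarz) auto
  note sq_bound
  also have "ennreal ((cmod (Q - P))\<^sup>2) * (ennreal I)\<^sup>2
      \<le> ennreal ((cmod (Q - P))\<^sup>2) * ((\<integral>\<^sup>+\<tau>. ennreal (indicator {0..1} \<tau> * w \<tau>) \<partial>lborel)
        * (\<integral>\<^sup>+\<tau>. ennreal (indicator {0..1} \<tau> * ((V \<tau>)\<^sup>2 / w \<tau>)) \<partial>lborel))"
    unfolding I_eq by (rule mult_left_mono[OF Cauchy_Schwarz]) simp
  finally show ?thesis by (simp add: mult.assoc)
qed

text \<open>A bound on the upper integral of a possibly non-measurable function.\<close>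

definition has_majorant :: "'a measure \<Rightarrow> ('a \<Rightarrow> real) \<Rightarrow> real \<Rightarrow> bool" where
  "has_majorant M g b \<longleftrightarrow>
     (\<exists>B\<in>borel_measurable M. (\<forall>\<omega>\<in>space M. ennreal (g \<omega>) \<le> B \<omega>) \<and> (\<integral>\<^sup>+\<omega>. B \<omega> \<partial>M) \<le> ennreal b)"

lemma has_majorant_nn_integral_le:
  assumes "has_majorant M g b"
  shows "(\<integral>\<^sup>+\<omega>. ennreal (g \<omega>) \<partial>M) \<le> ennreal b"
  using assms unfolding has_majorant_def by (meson nn_integral_mono order_trans)

lemma has_majorant_mono:
  assumes "has_majorant M g b" and "\<And>\<omega>. \<omega> \<in> space M \<Longrightarrow> g' \<omega> \<le> g \<omega>" and "b \<le> b'"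
  shows "has_majorant M g' b'"
proof -
  obtain B where "B \<in> borel_measurable M" "\<forall>\<omega>\<in>space M. ennreal (g \<omega>) \<le> B \<omega>" "(\<integral>\<^sup>+\<omega>. B \<omega> \<partial>M) \<le> ennreal b"
    using assms(1) unfolding has_majorant_def by blast
  moreover have "ennreal (g' \<omega>) \<le> ennreal (g \<omega>)" if "\<omega> \<in> space M" for \<omega>
    using assms(2)[OF that] by (rule ennreal_leI)
  moreover have "ennreal b \<le> ennreal b'" using \<open>b \<le> b'\<close> by (rule ennreal_leI)
  ultimately show ?thesis unfolding has_majorant_def by (meson order_trans)
qed

lemma has_majorant_add:
  assumes "has_majorant M g1 b1" "has_majorant M g2 b2"
    and "\<And>\<omega>. 0 \<le> g1 \<omega>" "\<And>\<omega>. 0 \<le> g2 \<omega>" "0 \<le> b1" "0 \<le> b2"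
  shows "has_majorant M (\<lambda>\<omega>. g1 \<omega> + g2 \<omega>) (b1 + b2)"
proof -
  obtain B1 where B1: "B1 \<in> borel_measurable M" "\<forall>\<omega>\<in>space M. ennreal (g1 \<omega>) \<le> B1 \<omega>" "(\<integral>\<^sup>+\<omega>. B1 \<omega> \<partial>M) \<le> ennreal b1"
    using assms(1) unfolding has_majorant_def by blast
  obtain B2 where B2: "B2 \<in> borel_measurable M" "\<forall>\<omega>\<in>space M. ennreal (g2 \<omega>) \<le> B2 \<omega>" "(\<integral>\<^sup>+\<omega>. B2 \<omega> \<partial>M) \<le> ennreal b2"
    using assms(2) unfolding has_majorant_def by blast
  have "\<forall>\<omega>\<in>space M. ennreal (g1 \<omega> + g2 \<omega>) \<le> B1 \<omega> + B2 \<omega>"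
    using B1(2) B2(2) assms(3,4) by (simp add: add_mono)
  moreover have "(\<integral>\<^sup>+\<omega>. B1 \<omega> + B2 \<omega> \<partial>M) \<le> ennreal (b1 + b2)"
    using B1 B2 assms(5,6) by (simp add: nn_integral_add add_mono)
  ultimately show ?thesis
    unfolding has_majorant_def using B1(1) B2(1) by (intro bexI[of _ "\<lambda>\<omega>. B1 \<omega> + B2 \<omega>"]) auto
qed

lemma has_majorant_sum:
  assumes "finite I" and "\<And>i. i \<in> I \<Longrightarrow> has_majorant M (g i) (b i)"
    and "\<And>i \<omega>. 0 \<le> g i \<omega>" and "\<And>i. 0 \<le> b i"
  shows "has_majorant M (\<lambda>\<omega>. \<Sum>i\<in>I. g i \<omega>) (\<Sum>i\<in>I. b i)"
  using assms
proof (induction I rule: finite_induct)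
  case empty
  show ?case unfolding has_majorant_def by (intro bexI[of _ "\<lambda>_. 0"]) auto
next
  case (insert i I)
  then have "has_majorant M (\<lambda>\<omega>. \<Sum>j\<in>I. g j \<omega>) (\<Sum>j\<in>I. b j)" by blast
  then have "has_majorant M (\<lambda>\<omega>. g i \<omega> + (\<Sum>j\<in>I. g j \<omega>)) (b i + (\<Sum>j\<in>I. b j))"
    using insert.prems by (intro has_majorant_add sum_nonneg) auto
  then show ?case using insert.hyps by simp
qed

lemma has_majorant_cmult:
  assumes "has_majorant M g b" and "0 \<le> c"
  shows "has_majorant M (\<lambda>\<omega>. c * g \<omega>) (c * b)"
proof -
  obtain B where B: "B \<in> borel_measurable M" "\<forall>\<omega>\<in>space M. ennreal (g \<omega>) \<le> B \<omega>" "(\<integral>\<^sup>+\<omega>. B \<omega> \<partial>M) \<le> ennreal b"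
    using assms(1) unfolding has_majorant_def by blast
  have "\<forall>\<omega>\<in>space M. ennreal (c * g \<omega>) \<le> ennreal c * B \<omega>"
    using B(2) \<open>0 \<le> c\<close> by (simp add: ennreal_mult' mult_left_mono)
  moreover have "(\<integral>\<^sup>+\<omega>. ennreal c * B \<omega> \<partial>M) \<le> ennreal (c * b)"
    using B \<open>0 \<le> c\<close> by (simp add: nn_integral_cmult ennreal_mult' mult_left_mono)
  ultimately show ?thesis
    unfolding has_majorant_def using B(1) by (intro bexI[of _ "\<lambda>\<omega>. ennreal c * B \<omega>"]) auto
qed

text \<open>Cauchy--Schwarz with the weight \<open>w = sqrt (variance_bound \<dots>)\<close> along the segment, followed by
  Fubini, bounds the second moment of the contour integral by \<open>|Q - P|\<^sup>2 F\<^sup>2 (\<integral>\<^sub>0\<^sup>1 w)\<^sup>2\<close>.\<close>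

lemma has_majorant_contour_integral_increment:
  fixes Z :: "'a \<Rightarrow> complex \<Rightarrow> complex" and M :: "'a measure" and f :: "complex \<Rightarrow> complex"
  assumes prob: "prob_space M"
    and meas: "\<And>z. z \<in> upper_half \<Longrightarrow> (\<lambda>\<omega>. Z \<omega> z) \<in> borel_measurable M"
    and hol: "\<And>\<omega>. \<omega> \<in> space M \<Longrightarrow> Z \<omega> holomorphic_on upper_half"
    and cov: "\<And>z w. z \<in> upper_half \<Longrightarrow> w \<in> upper_half \<Longrightarrow>
        integrable M (\<lambda>\<omega>. Z \<omega> z * cnj (Z \<omega> w)) \<and>
        (\<integral>\<omega>. Z \<omega> z * cnj (Z \<omega> w) \<partial>M)
          = of_real (cH H) * (- \<i> * (z - cnj w)) powr (of_real (2 * H - 2))"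
    and H: "0 < H" "H < 1/2" and \<alpha>: "0 < \<alpha>" "\<alpha> < 1"
    and PQ: "Im P \<ge> 0" "Im Q \<ge> 0"
    and cont_f: "continuous_on (closed_segment P Q) f"
    and F: "\<And>z. z \<in> closed_segment P Q \<Longrightarrow> cmod (f z) \<le> F"
    and e: "\<epsilon> > 0" "\<eta> > 0" "\<epsilon> \<noteq> \<eta>"
    and weight: "(\<integral>\<^sup>+\<tau>. ennreal (indicator {0..1} \<tau> * sqrt (variance_bound H \<alpha> \<epsilon> \<eta> (Im (linepath P Q \<tau>)))) \<partial>lborel)
      \<le> ennreal a"
  shows "has_majorant M
    (\<lambda>\<omega>. (cmod (contour_integral (linepath P Q) (\<lambda>z. f z * (Z \<omega> (z + \<i> * of_real \<epsilon>) - Z \<omega> (z + \<i> * of_real \<eta>)))))\<^sup>2)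
    ((cmod (Q - P))\<^sup>2 * F\<^sup>2 * a\<^sup>2)"
proof -
  interpret prob_space M by (rule prob)
  interpret PSF: pair_sigma_finite M lborel
    by (intro pair_sigma_finite.intro prob_space_imp_sigma_finite prob sigma_finite_lborel)
  define lp where "lp \<tau> = linepath P Q (max 0 (min 1 \<tau>))" for \<tau>
  define w where "w \<tau> = sqrt (variance_bound H \<alpha> \<epsilon> \<eta> (Im (lp \<tau>)))" for \<tau>
  define c1 where "c1 = \<i> * of_real \<epsilon>"
  define c2 where "c2 = \<i> * of_real \<eta>"
  have lp01: "lp \<tau> = linepath P Q \<tau>" if "\<tau> \<in> {0..1}" for \<tau> using that by (simp add: lp_def)
  have seg_Im: "closed_segment P Q \<subseteq> {z. Im z \<ge> 0}"
    using closed_segment_subset[OF _ _ convex_halfspace_Im_ge, of P 0 Q] PQ by auto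
  have lp_Im: "Im (lp \<tau>) \<ge> 0" for \<tau>
    using seg_Im linepath_in_path[of "max 0 (min 1 \<tau>)" P Q] by (auto simp: lp_def)
  have cont_lp: "continuous_on UNIV lp" unfolding lp_def linepath_def by (intro continuous_intros)
  have lp_upper: "lp \<tau> + c1 \<in> upper_half" "lp \<tau> + c2 \<in> upper_half" for \<tau>
    using lp_Im[of \<tau>] e by (simp_all add: c1_def c2_def upper_half_def)
  have w_pos: "w \<tau> > 0" for \<tau>
    using lp_Im[of \<tau>] cH_pos[OF H] e by (simp add: w_def variance_bound_def)
  have "continuous_on UNIV w"
  proof -
    have pos: "Im (lp \<tau>) + min \<epsilon> \<eta> > 0" for \<tau> using lp_Im[of \<tau>] e by (smt (verit))
    then have "Im (lp \<tau>) + min \<epsilon> \<eta> \<noteq> 0" for \<tau> by (metis less_irrefl)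
    then show ?thesis unfolding w_def variance_bound_def using cont_lp pos
      by (intro continuous_intros continuous_on_powr') (auto intro: continuous_intros)
  qed
  then have [measurable]: "w \<in> borel_measurable borel" using borel_measurable_continuous_onI by blast
  have cont_Z: "continuous_on UNIV (\<lambda>\<tau>. Z \<omega> (lp \<tau> + c))"
    if "\<omega> \<in> space M" "\<And>\<tau>. lp \<tau> + c \<in> upper_half" for \<omega> c
    by (rule continuous_on_compose2[OF holomorphic_on_imp_continuous_on[OF hol[OF that(1)]]])
      (use cont_lp that(2) in \<open>auto intro: continuous_intros\<close>)
  define V where "V \<omega> \<tau> = F * cmod (Z \<omega> (lp \<tau> + c1) - Z \<omega> (lp \<tau> + c2))" for \<omega> \<tau>
  have [measurable]: "(\<lambda>x. Z (fst x) (lp (snd x) + c1)) \<in> borel_measurable (M \<Otimes>\<^sub>M lborel)"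
    "(\<lambda>x. Z (fst x) (lp (snd x) + c2)) \<in> borel_measurable (M \<Otimes>\<^sub>M lborel)"
    using lp_upper cont_lp
    by (intro borel_measurable_process_along_path[OF meas holomorphic_on_imp_continuous_on[OF hol]];
        auto intro: continuous_intros)+
  define G where "G \<omega> \<tau> = ennreal (indicator {0..1} \<tau> * ((V \<omega> \<tau>)\<^sup>2 / w \<tau>))" for \<omega> \<tau>
  have G_meas: "case_prod G \<in> borel_measurable (M \<Otimes>\<^sub>M lborel)"
    unfolding G_def V_def case_prod_beta' by measurable
  define A where "A = (\<integral>\<^sup>+\<tau>. ennreal (indicator {0..1} \<tau> * w \<tau>) \<partial>lborel)"
  define B where "B \<omega> = ennreal ((cmod (Q - P))\<^sup>2) * A * (\<integral>\<^sup>+\<tau>. G \<omega> \<tau> \<partial>lborel)" for \<omega>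
  have "F \<ge> 0" using F[of P] by (meson ends_in_segment(1) norm_ge_zero order_trans)
  have "B \<in> borel_measurable M"
    unfolding B_def using lborel.borel_measurable_nn_integral[OF G_meas] by measurable
  moreover have "ennreal ((cmod (contour_integral (linepath P Q) (\<lambda>z. f z * (Z \<omega> (z + c1) - Z \<omega> (z + c2)))))\<^sup>2) \<le> B \<omega>"
    if "\<omega> \<in> space M" for \<omega>
    unfolding B_def G_def A_def
  proof (rule norm_contour_integral_linepath_sq_le)
    have "continuous_on (closed_segment P Q) (\<lambda>z. Z \<omega> (z + c))"
      if "\<And>z. z \<in> closed_segment P Q \<Longrightarrow> z + c \<in> upper_half" for c
      by (rule continuous_on_compose2[OF holomorphic_on_imp_continuous_on[OF hol[OF \<open>\<omega> \<in> space M\<close>]]])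
        (use that in \<open>auto intro: continuous_intros\<close>)
    moreover have "z + c1 \<in> upper_half" "z + c2 \<in> upper_half" if "z \<in> closed_segment P Q" for z
      using seg_Im that e by (auto simp: c1_def c2_def upper_half_def)
    ultimately show "continuous_on (closed_segment P Q) (\<lambda>z. f z * (Z \<omega> (z + c1) - Z \<omega> (z + c2)))"
      using cont_f by (intro continuous_intros) auto
    show "continuous_on UNIV (V \<omega>)"
      unfolding V_def using cont_Z[OF that lp_upper(1)] cont_Z[OF that lp_upper(2)] by (intro continuous_intros)
    show "cmod (f (linepath P Q \<tau>) * (Z \<omega> (linepath P Q \<tau> + c1) - Z \<omega> (linepath P Q \<tau> + c2))) \<le> V \<omega> \<tau>"
      if "\<tau> \<in> {0..1}" for \<tau>
      using F[OF linepath_in_path[OF that]] unfolding V_def lp01[OF that]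
      by (simp add: norm_mult mult_right_mono)
  qed (use w_pos in auto)
  moreover have "(\<integral>\<^sup>+\<omega>. B \<omega> \<partial>M) \<le> ennreal ((cmod (Q - P))\<^sup>2 * F\<^sup>2 * a\<^sup>2)"
  proof -
    have inner: "(\<integral>\<^sup>+\<omega>. G \<omega> \<tau> \<partial>M) \<le> ennreal (F\<^sup>2) * ennreal (indicator {0..1} \<tau> * w \<tau>)" for \<tau>
    proof (cases "\<tau> \<in> {0..1}")
      case True
      have "(\<integral>\<^sup>+\<omega>. G \<omega> \<tau> \<partial>M)
          = (\<integral>\<^sup>+\<omega>. ennreal (F\<^sup>2 / w \<tau>) * ennreal ((cmod (Z \<omega> (lp \<tau> + c1) - Z \<omega> (lp \<tau> + c2)))\<^sup>2) \<partial>M)"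
        using True w_pos[of \<tau>]
        by (intro nn_integral_cong) (simp add: G_def V_def ennreal_mult[symmetric] power_mult_distrib)
      also have "\<dots> = ennreal (F\<^sup>2 / w \<tau>) * (\<integral>\<^sup>+\<omega>. ennreal ((cmod (Z \<omega> (lp \<tau> + c1) - Z \<omega> (lp \<tau> + c2)))\<^sup>2) \<partial>M)"
        using meas[OF lp_upper(1)] meas[OF lp_upper(2)] by (intro nn_integral_cmult) measurable
      also have "\<dots> \<le> ennreal (F\<^sup>2 / w \<tau>) * ennreal ((w \<tau>)\<^sup>2)"
        using second_moment_vertical_increment_le[OF cov H \<alpha> lp_Im[of \<tau>] e(1,2)]
          cH_pos[OF H] lp_Im[of \<tau>] e
        by (intro mult_left_mono) (simp_all add: w_def c1_def c2_def variance_bound_def)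
      also have "\<dots> = ennreal (F\<^sup>2) * ennreal (indicator {0..1} \<tau> * w \<tau>)"
        using True w_pos[of \<tau>] by (simp add: ennreal_mult[symmetric] power2_eq_square mult.assoc)
      finally show ?thesis .
    qed (simp add: G_def)
    have "(\<integral>\<^sup>+\<omega>. (\<integral>\<^sup>+\<tau>. G \<omega> \<tau> \<partial>lborel) \<partial>M) = (\<integral>\<^sup>+\<tau>. (\<integral>\<^sup>+\<omega>. G \<omega> \<tau> \<partial>M) \<partial>lborel)"
      using PSF.Fubini'[OF G_meas] by simp
    also have "\<dots> \<le> (\<integral>\<^sup>+\<tau>. ennreal (F\<^sup>2) * ennreal (indicator {0..1} \<tau> * w \<tau>) \<partial>lborel)"
      by (intro nn_integral_mono inner)
    also have "\<dots> = ennreal (F\<^sup>2) * A" unfolding A_def by (rule nn_integral_cmult) measurable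
    finally have G_total: "(\<integral>\<^sup>+\<omega>. (\<integral>\<^sup>+\<tau>. G \<omega> \<tau> \<partial>lborel) \<partial>M) \<le> ennreal (F\<^sup>2) * A" .
    have "A = (\<integral>\<^sup>+\<tau>. ennreal (indicator {0..1} \<tau> * sqrt (variance_bound H \<alpha> \<epsilon> \<eta> (Im (linepath P Q \<tau>)))) \<partial>lborel)"
      unfolding A_def w_def by (intro nn_integral_cong) (auto simp: lp01 indicator_def)
    then have "A \<le> ennreal a" using weight by simp
    have "(\<integral>\<^sup>+\<omega>. B \<omega> \<partial>M) = ennreal ((cmod (Q - P))\<^sup>2) * A * (\<integral>\<^sup>+\<omega>. (\<integral>\<^sup>+\<tau>. G \<omega> \<tau> \<partial>lborel) \<partial>M)"
      unfolding B_def using lborel.borel_measurable_nn_integral[OF G_meas] by (rule nn_integral_cmult)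
    also have "\<dots> \<le> ennreal ((cmod (Q - P))\<^sup>2) * A * (ennreal (F\<^sup>2) * A)"
      using G_total by (rule mult_left_mono) simp
    also have "\<dots> \<le> ennreal ((cmod (Q - P))\<^sup>2) * ennreal a * (ennreal (F\<^sup>2) * ennreal a)"
      using \<open>A \<le> ennreal a\<close> by (intro mult_mono) auto
    also have "\<dots> \<le> ennreal ((cmod (Q - P))\<^sup>2 * F\<^sup>2 * a\<^sup>2)"
      using \<open>F \<ge> 0\<close> by (cases "a \<ge> 0") (simp_all add: ennreal_mult[symmetric] power2_eq_square ennreal_neg mult_ac)
    finally show ?thesis .
  qed
  ultimately show ?thesis
    unfolding has_majorant_def c1_def c2_def by blast
qed

lemma nn_integral_sqrt_powr_weight_le:
  fixes g :: "real \<Rightarrow> complex"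
  assumes L: "L > 0" and m: "m > 0" and C: "C \<ge> 0" and \<gamma>: "-2 < \<gamma>" "\<gamma> < 0"
    and Im_g: "\<And>\<tau>. \<tau> \<in> {0<..1} \<Longrightarrow> Im (g \<tau>) \<ge> \<tau> * L"
  shows "(\<integral>\<^sup>+\<tau>. ennreal (indicator {0..1} \<tau> * sqrt (C * (Im (g \<tau>) + m) powr \<gamma>)) \<partial>lborel)
      \<le> ennreal (sqrt C * L powr (\<gamma> / 2) / (\<gamma> / 2 + 1))"
proof -
  define \<kappa> where "\<kappa> = \<gamma> / 2"
  have \<kappa>: "-1 < \<kappa>" "\<kappa> < 0" using \<gamma> by (auto simp: \<kappa>_def)
  have pointwise: "ennreal (indicator {0..1} \<tau> * sqrt (C * (Im (g \<tau>) + m) powr \<gamma>))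
      \<le> ennreal (indicator {0..1} \<tau> * (sqrt C * L powr \<kappa> * \<tau> powr \<kappa>))" if "\<tau> \<noteq> 0" for \<tau>
  proof (cases "\<tau> \<in> {0..1}")
    case True
    then have \<tau>: "\<tau> \<in> {0<..1}" using \<open>\<tau> \<noteq> 0\<close> by auto
    then have "\<tau> * L > 0" using L by simp
    have height: "Im (g \<tau>) + m \<ge> \<tau> * L" using Im_g[OF \<tau>] m by simp
    have "sqrt (C * (Im (g \<tau>) + m) powr \<gamma>) = sqrt C * (Im (g \<tau>) + m) powr \<kappa>"
      using height \<open>\<tau> * L > 0\<close>
      by (simp add: real_sqrt_mult powr_half_sqrt[symmetric] powr_powr \<kappa>_def)
    also have "\<dots> \<le> sqrt C * (\<tau> * L) powr \<kappa>"
      using height \<open>\<tau> * L > 0\<close> \<kappa> C by (intro mult_left_mono powr_mono2') auto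
    also have "\<dots> = sqrt C * L powr \<kappa> * \<tau> powr \<kappa>"
      using \<tau> L by (simp add: powr_mult mult_ac)
    finally show ?thesis using True by (intro ennreal_leI) simp
  qed simp
  have "(\<integral>\<^sup>+\<tau>. ennreal (indicator {0..1} \<tau> * sqrt (C * (Im (g \<tau>) + m) powr \<gamma>)) \<partial>lborel)
      \<le> (\<integral>\<^sup>+\<tau>. ennreal (indicator {0..1} \<tau> * (sqrt C * L powr \<kappa> * \<tau> powr \<kappa>)) \<partial>lborel)"
  proof (rule nn_integral_mono_AE)
    show "AE \<tau> in lborel. ennreal (indicator {0..1} \<tau> * sqrt (C * (Im (g \<tau>) + m) powr \<gamma>))
      \<le> ennreal (indicator {0..1} \<tau> * (sqrt C * L powr \<kappa> * \<tau> powr \<kappa>))"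
      using AE_lborel_singleton[of 0] by (rule AE_mp) (use pointwise in blast)
  qed
  also have "\<dots> = ennreal (sqrt C * L powr \<kappa> * (1 / (\<kappa> + 1)))"
  proof -
    have "((\<lambda>x. x powr \<kappa>) has_integral (1 / (\<kappa> + 1))) {0..1}"
      using has_integral_powr_from_0[of \<kappa> 1] \<kappa> by simp
    then have "((\<lambda>x. sqrt C * L powr \<kappa> * x powr \<kappa>) has_integral (sqrt C * L powr \<kappa> * (1 / (\<kappa> + 1)))) {0..1}"
      by (rule has_integral_mult_right)
    then show ?thesis
      using C nn_integral_has_integral_lebesgue[of "{0..1}" "\<lambda>x. sqrt C * L powr \<kappa> * x powr \<kappa>"] by simp
  qed
  finally show ?thesis by (simp add: \<kappa>_def)
qed

lemma has_majorant_side_increment: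
  fixes Z :: "'a \<Rightarrow> complex \<Rightarrow> complex" and M :: "'a measure" and f :: "complex \<Rightarrow> complex"
  assumes prob: "prob_space M"
    and meas: "\<And>z. z \<in> upper_half \<Longrightarrow> (\<lambda>\<omega>. Z \<omega> z) \<in> borel_measurable M"
    and hol: "\<And>\<omega>. \<omega> \<in> space M \<Longrightarrow> Z \<omega> holomorphic_on upper_half"
    and cov: "\<And>z w. z \<in> upper_half \<Longrightarrow> w \<in> upper_half \<Longrightarrow>
        integrable M (\<lambda>\<omega>. Z \<omega> z * cnj (Z \<omega> w)) \<and>
        (\<integral>\<omega>. Z \<omega> z * cnj (Z \<omega> w) \<partial>M)
          = of_real (cH H) * (- \<i> * (z - cnj w)) powr (of_real (2 * H - 2))"
    and H: "0 < H" "H < 1/2" and \<alpha>: "0 < \<alpha>" "\<alpha> < 2 * H"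
    and PQ: "Im P \<ge> 0" "Im Q \<ge> 0" and L: "L > 0" "cmod (Q - P) = L"
    and Im_linepath: "\<And>\<tau>. \<tau> \<in> {0<..1} \<Longrightarrow> Im (linepath P Q \<tau>) \<ge> \<tau> * L"
    and cont_f: "continuous_on (closed_segment P Q) f"
    and F: "\<And>z. z \<in> closed_segment P Q \<Longrightarrow> cmod (f z) \<le> F"
    and e: "\<epsilon> > 0" "\<eta> > 0" "\<epsilon> \<noteq> \<eta>"
  shows "has_majorant M
    (\<lambda>\<omega>. (cmod (contour_integral (linepath P Q) (\<lambda>z. f z * (Z \<omega> (z + \<i> * of_real \<epsilon>) - Z \<omega> (z + \<i> * of_real \<eta>)))))\<^sup>2)
    (F\<^sup>2 * cH H * \<bar>\<epsilon> - \<eta>\<bar> powr \<alpha> * L powr (2 * H - \<alpha>) / ((2 * H - 2 - \<alpha>) / 2 + 1)\<^sup>2)"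
proof -
  define C where "C = cH H * \<bar>\<epsilon> - \<eta>\<bar> powr \<alpha>"
  define \<gamma> where "\<gamma> = 2 * H - 2 - \<alpha>"
  define a where "a = sqrt C * L powr (\<gamma> / 2) / (\<gamma> / 2 + 1)"
  have "C \<ge> 0" using cH_pos[OF H] by (simp add: C_def)
  have \<gamma>: "-2 < \<gamma>" "\<gamma> < 0" using \<alpha> H by (auto simp: \<gamma>_def)
  have "(\<integral>\<^sup>+\<tau>. ennreal (indicator {0..1} \<tau> * sqrt (variance_bound H \<alpha> \<epsilon> \<eta> (Im (linepath P Q \<tau>)))) \<partial>lborel)
      \<le> ennreal a"
    unfolding variance_bound_def a_def C_def[symmetric] \<gamma>_def[symmetric]
    using e by (intro nn_integral_sqrt_powr_weight_le[OF L(1) _ \<open>C \<ge> 0\<close> \<gamma> Im_linepath]) auto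
  then have "has_majorant M
    (\<lambda>\<omega>. (cmod (contour_integral (linepath P Q) (\<lambda>z. f z * (Z \<omega> (z + \<i> * of_real \<epsilon>) - Z \<omega> (z + \<i> * of_real \<eta>)))))\<^sup>2)
    ((cmod (Q - P))\<^sup>2 * F\<^sup>2 * a\<^sup>2)"
    using \<alpha> H by (intro has_majorant_contour_integral_increment[OF prob meas hol cov H _ _ PQ cont_f F e]) auto
  moreover have "L\<^sup>2 * a\<^sup>2 = C * L powr (2 * H - \<alpha>) / (\<gamma> / 2 + 1)\<^sup>2"
  proof -
    have "(L powr (\<gamma> / 2))\<^sup>2 = L powr \<gamma>" by (simp add: power2_eq_square powr_add[symmetric])
    moreover have "L\<^sup>2 = L powr 2" using L by (simp add: powr_numeral)
    ultimately have "L\<^sup>2 * (L powr (\<gamma> / 2))\<^sup>2 = L powr (2 + \<gamma>)" by (simp add: powr_add)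
    then show ?thesis using \<open>C \<ge> 0\<close> by (simp add: a_def \<gamma>_def power_divide power_mult_distrib)
  qed
  ultimately show ?thesis
    using L(2) by (elim has_majorant_mono) (simp_all add: C_def \<gamma>_def field_simps)
qed

lemma norm_le_sup_norm_on:
  assumes "bounded (f ` S)" and "z \<in> S"
  shows "cmod (f z) \<le> sup_norm_on f S"
proof -
  obtain K where "\<forall>y\<in>f ` S. norm y \<le> K" using assms(1) unfolding bounded_iff by blast
  then have "bdd_above ((\<lambda>z. cmod (f z)) ` S)" by (auto intro: bdd_aboveI2)
  then show ?thesis unfolding sup_norm_on_def using cSUP_upper[OF assms(2)] by blast
qed

lemma two_Re_add_diff_sq_le:
  fixes a b c :: complex
  shows "(2 * Re (a + b - c))\<^sup>2 \<le> 12 * ((cmod a)\<^sup>2 + (cmod b)\<^sup>2 + (cmod c)\<^sup>2)"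
proof -
  have "\<bar>Re (a + b - c)\<bar> \<le> cmod (a + b - c)" by (rule abs_Re_le_cmod)
  also have "\<dots> \<le> cmod (a + b) + cmod c" by (rule norm_triangle_ineq4)
  also have "\<dots> \<le> cmod a + cmod b + cmod c" using norm_triangle_ineq[of a b] by simp
  finally have "(Re (a + b - c))\<^sup>2 \<le> (cmod a + cmod b + cmod c)\<^sup>2"
    using power_mono[of "\<bar>Re (a + b - c)\<bar>" _ 2] by simp
  also have "\<dots> \<le> 3 * ((cmod a)\<^sup>2 + (cmod b)\<^sup>2 + (cmod c)\<^sup>2)"
  proof -
    have "3 * ((cmod a)\<^sup>2 + (cmod b)\<^sup>2 + (cmod c)\<^sup>2) - (cmod a + cmod b + cmod c)\<^sup>2
        = (cmod a - cmod b)\<^sup>2 + (cmod b - cmod c)\<^sup>2 + (cmod a - cmod c)\<^sup>2"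
      by (simp add: power2_eq_square algebra_simps)
    moreover have "0 \<le> (cmod a - cmod b)\<^sup>2 + (cmod b - cmod c)\<^sup>2 + (cmod a - cmod c)\<^sup>2" by simp
    ultimately show ?thesis by linarith
  qed
  finally have "(Re (a + b - c))\<^sup>2 \<le> 3 * ((cmod a)\<^sup>2 + (cmod b)\<^sup>2 + (cmod c)\<^sup>2)" .
  moreover have "(2 * Re (a + b - c))\<^sup>2 = 4 * (Re (a + b - c))\<^sup>2" by (simp only: power_mult_distrib) simp
  ultimately show ?thesis by linarith
qed

lemma has_majorant_RS_increment:
  fixes Z :: "'a \<Rightarrow> complex \<Rightarrow> complex" and M :: "'a measure" and f :: "complex \<Rightarrow> complex"
  assumes prob: "prob_space M"
    and meas: "\<And>z. z \<in> upper_half \<Longrightarrow> (\<lambda>\<omega>. Z \<omega> z) \<in> borel_measurable M"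
    and hol: "\<And>\<omega>. \<omega> \<in> space M \<Longrightarrow> Z \<omega> holomorphic_on upper_half"
    and cov: "\<And>z w. z \<in> upper_half \<Longrightarrow> w \<in> upper_half \<Longrightarrow>
        integrable M (\<lambda>\<omega>. Z \<omega> z * cnj (Z \<omega> w)) \<and>
        (\<integral>\<omega>. Z \<omega> z * cnj (Z \<omega> w) \<partial>M)
          = of_real (cH H) * (- \<i> * (z - cnj w)) powr (of_real (2 * H - 2))"
    and H: "0 < H" "H < 1/2" and \<alpha>: "0 < \<alpha>" "\<alpha> < 2 * H"
    and "s < t" and an: "f analytic_on Pi_rect s t" and real: "\<forall>u\<in>{s..t}. Im (f (of_real u)) = 0"
    and F: "\<And>z. z \<in> Pi_rect s t \<Longrightarrow> cmod (f z) \<le> F"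
    and e: "\<epsilon> > 0" "\<eta> > 0" "\<epsilon> \<noteq> \<eta>"
  shows "has_majorant M
    (\<lambda>\<omega>. (RS_integral (\<lambda>u. Re (f (of_real u))) (Xeps (Z \<omega>) \<epsilon>) s t
          - RS_integral (\<lambda>u. Re (f (of_real u))) (Xeps (Z \<omega>) \<eta>) s t)\<^sup>2)
    (36 * (F\<^sup>2 * cH H * \<bar>\<epsilon> - \<eta>\<bar> powr \<alpha> * (t - s) powr (2 * H - \<alpha>) / ((2 * H - 2 - \<alpha>) / 2 + 1)\<^sup>2))"
proof -
  define L where "L = t - s"
  define b where "b = F\<^sup>2 * cH H * \<bar>\<epsilon> - \<eta>\<bar> powr \<alpha> * L powr (2 * H - \<alpha>) / ((2 * H - 2 - \<alpha>) / 2 + 1)\<^sup>2"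
  define side where "side \<omega> P Q = contour_integral (linepath P Q)
      (\<lambda>z. f z * (Z \<omega> (z + \<i> * of_real \<epsilon>) - Z \<omega> (z + \<i> * of_real \<eta>)))" for \<omega> P Q
  define P1 where "P1 = (of_real s :: complex)"
  define P2 where "P2 = of_real s + \<i> * of_real L"
  define P3 where "P3 = of_real t + \<i> * of_real L"
  define P4 where "P4 = (of_real t :: complex)"
  have "L > 0" using \<open>s < t\<close> by (simp add: L_def)
  have "b \<ge> 0" using cH_pos[OF H] by (simp add: b_def)
  have corners: "P1 \<in> Pi_rect s t" "P2 \<in> Pi_rect s t" "P3 \<in> Pi_rect s t" "P4 \<in> Pi_rect s t"
    using \<open>s < t\<close> unfolding P1_def P2_def P3_def P4_def Pi_rect_def L_def by auto
  have "continuous_on (Pi_rect s t) f"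
    using holomorphic_on_imp_continuous_on[OF analytic_imp_holomorphic[OF an]] .
  have side_majorant: "has_majorant M (\<lambda>\<omega>. (cmod (side \<omega> P Q))\<^sup>2) b"
    if "P \<in> Pi_rect s t" "Q \<in> Pi_rect s t" "Im P \<ge> 0" "Im Q \<ge> 0" "cmod (Q - P) = L"
      and "\<And>\<tau>. \<tau> \<in> {0<..1} \<Longrightarrow> Im (linepath P Q \<tau>) \<ge> \<tau> * L" for P Q
  proof -
    have "closed_segment P Q \<subseteq> Pi_rect s t"
      using closed_segment_subset[OF that(1,2)] by (simp add: Pi_rect_cbox convex_box)
    then show ?thesis unfolding side_def b_def
      using \<open>continuous_on (Pi_rect s t) f\<close> continuous_on_subset F \<open>L > 0\<close> that
      by (intro has_majorant_side_increment[OF prob meas hol cov H \<alpha>]) (auto simp: e)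
  qed
  have "cmod (complex_of_real t - complex_of_real s) = L"
    using \<open>s < t\<close> by (simp add: L_def flip: of_real_diff)
  then have lengths: "cmod (P2 - P1) = L" "cmod (P3 - P2) = L" "cmod (P3 - P4) = L"
    using \<open>L > 0\<close> by (simp_all add: P1_def P2_def P3_def P4_def norm_mult)
  have "Im (linepath P2 P3 \<tau>) = L" for \<tau>
    by (simp add: P2_def P3_def linepath_def algebra_simps)
  then have heights: "Im (linepath P1 P2 \<tau>) \<ge> \<tau> * L" "Im (linepath P2 P3 \<tau>) \<ge> \<tau> * L"
    "Im (linepath P4 P3 \<tau>) \<ge> \<tau> * L" if "\<tau> \<in> {0<..1}" for \<tau>
    using that \<open>L > 0\<close> by (simp_all add: P1_def P2_def P4_def P3_def linepath_def mult_le_cancel_right1)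
  have "has_majorant M (\<lambda>\<omega>. 12 * ((cmod (side \<omega> P1 P2))\<^sup>2 + (cmod (side \<omega> P2 P3))\<^sup>2 + (cmod (side \<omega> P4 P3))\<^sup>2))
      (12 * (b + b + b))"
    using side_majorant corners lengths heights \<open>L > 0\<close> \<open>b \<ge> 0\<close>
    by (intro has_majorant_cmult has_majorant_add) (auto simp: P1_def P2_def P3_def P4_def)
  moreover have "(RS_integral (\<lambda>u. Re (f (of_real u))) (Xeps (Z \<omega>) \<epsilon>) s t
          - RS_integral (\<lambda>u. Re (f (of_real u))) (Xeps (Z \<omega>) \<eta>) s t)\<^sup>2
      \<le> 12 * ((cmod (side \<omega> P1 P2))\<^sup>2 + (cmod (side \<omega> P2 P3))\<^sup>2 + (cmod (side \<omega> P4 P3))\<^sup>2)"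
    if "\<omega> \<in> space M" for \<omega>
    unfolding RS_integral_Xeps_diff_eq_sides[OF hol[OF that] an real \<open>s < t\<close> e(1,2)]
    unfolding side_def P1_def P2_def P3_def P4_def L_def by (rule two_Re_add_diff_sq_le)
  ultimately show ?thesis by (rule has_majorant_mono) (simp_all add: b_def L_def mult_ac)
qed

theorem lemma5p3:
  fixes M :: "'a measure" and X :: "nat \<Rightarrow> 'a \<Rightarrow> complex \<Rightarrow> complex"
    and H T :: real and n :: nat
  assumes prob: "prob_space M"
    and H: "1/3 < H" "H < 1/2" and n: "n \<ge> 1" and T: "T > 0"
    and gauss: "\<And>j. j < n \<Longrightarrow> complex_gaussian_process M upper_half (X j)"
    and analytic: "\<And>j \<omega>. j < n \<Longrightarrow> \<omega> \<in> space M \<Longrightarrow> X j \<omega> holomorphic_on upper_half"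
    and centered: "\<And>j z. j < n \<Longrightarrow> z \<in> upper_half \<Longrightarrow>
        integrable M (\<lambda>\<omega>. X j \<omega> z) \<and> (\<integral>\<omega>. X j \<omega> z \<partial>M) = 0"
    and cov0: "\<And>j z w. j < n \<Longrightarrow> z \<in> upper_half \<Longrightarrow> w \<in> upper_half \<Longrightarrow>
        integrable M (\<lambda>\<omega>. X j \<omega> z * X j \<omega> w) \<and> (\<integral>\<omega>. X j \<omega> z * X j \<omega> w \<partial>M) = 0"
    and cov: "\<And>j z w. j < n \<Longrightarrow> z \<in> upper_half \<Longrightarrow> w \<in> upper_half \<Longrightarrow>
        integrable M (\<lambda>\<omega>. X j \<omega> z * cnj (X j \<omega> w)) \<and>
        (\<integral>\<omega>. X j \<omega> z * cnj (X j \<omega> w) \<partial>M)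
          = of_real (cH H) * (- \<i> * (z - cnj w)) powr (of_real (2 * H - 2))"
    and indep: "prob_space.indep_vars M (\<lambda>_. Pi\<^sub>M UNIV (\<lambda>_. borel)) (\<lambda>j \<omega>. X j \<omega>) {..<n}"
  shows "\<forall>\<alpha>. 0 < \<alpha> \<and> \<alpha> < 2 * H \<longrightarrow>
    (\<exists>c::real. \<forall>s t (f :: complex \<Rightarrow> complex) \<epsilon> \<eta>.
       0 \<le> s \<and> s < t \<and> t \<le> T \<and>
       f analytic_on Pi_rect s t \<and>
       (\<forall>u\<in>{s..t}. Im (f (of_real u)) = 0) \<and>
       bounded (f ` Pi_rect s t) \<and>
       \<epsilon> > 0 \<and> \<eta> > 0 \<longrightarrow>
       (\<integral>\<^sup>+\<omega>. ennreal (\<Sum>j<n.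
           (RS_integral (\<lambda>u. Re (f (of_real u))) (Xeps (X j \<omega>) \<epsilon>) s t
            - RS_integral (\<lambda>u. Re (f (of_real u))) (Xeps (X j \<omega>) \<eta>) s t)\<^sup>2) \<partial>M)
       \<le> ennreal (c * (sup_norm_on f (Pi_rect s t))\<^sup>2 * (t - s) powr (2 * H - \<alpha>)
                   * \<bar>\<epsilon> - \<eta>\<bar> powr \<alpha>))"
proof (intro allI impI)
  fix \<alpha> :: real assume \<alpha>: "0 < \<alpha> \<and> \<alpha> < 2 * H"
  have H': "0 < H" "H < 1/2" using H by auto
  have meas: "(\<lambda>\<omega>. X j \<omega> z) \<in> borel_measurable M" if "j < n" "z \<in> upper_half" for j z
    using gauss[OF that(1)] that(2) unfolding complex_gaussian_process_def by blast
  define c where "c = 36 * real n * cH H / ((2 * H - 2 - \<alpha>) / 2 + 1)\<^sup>2"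
  show "\<exists>c. \<forall>s t f \<epsilon> \<eta>. 0 \<le> s \<and> s < t \<and> t \<le> T \<and> f analytic_on Pi_rect s t \<and>
      (\<forall>u\<in>{s..t}. Im (f (of_real u)) = 0) \<and> bounded (f ` Pi_rect s t) \<and> \<epsilon> > 0 \<and> \<eta> > 0 \<longrightarrow>
      (\<integral>\<^sup>+\<omega>. ennreal (\<Sum>j<n. (RS_integral (\<lambda>u. Re (f (of_real u))) (Xeps (X j \<omega>) \<epsilon>) s t
            - RS_integral (\<lambda>u. Re (f (of_real u))) (Xeps (X j \<omega>) \<eta>) s t)\<^sup>2) \<partial>M)
      \<le> ennreal (c * (sup_norm_on f (Pi_rect s t))\<^sup>2 * (t - s) powr (2 * H - \<alpha>) * \<bar>\<epsilon> - \<eta>\<bar> powr \<alpha>)"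
  proof (intro exI[of _ c] allI impI, elim conjE)
    fix s t :: real and f :: "complex \<Rightarrow> complex" and \<epsilon> \<eta> :: real
    assume "0 \<le> s" "s < t" "t \<le> T" "f analytic_on Pi_rect s t" "\<forall>u\<in>{s..t}. Im (f (of_real u)) = 0"
      "bounded (f ` Pi_rect s t)" "\<epsilon> > 0" "\<eta> > 0"
    note hyps = this
    show "(\<integral>\<^sup>+\<omega>. ennreal (\<Sum>j<n. (RS_integral (\<lambda>u. Re (f (of_real u))) (Xeps (X j \<omega>) \<epsilon>) s t
            - RS_integral (\<lambda>u. Re (f (of_real u))) (Xeps (X j \<omega>) \<eta>) s t)\<^sup>2) \<partial>M)
      \<le> ennreal (c * (sup_norm_on f (Pi_rect s t))\<^sup>2 * (t - s) powr (2 * H - \<alpha>) * \<bar>\<epsilon> - \<eta>\<bar> powr \<alpha>)"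
    proof (cases "\<epsilon> = \<eta>")
      case False
      have "has_majorant M (\<lambda>\<omega>. \<Sum>j<n. (RS_integral (\<lambda>u. Re (f (of_real u))) (Xeps (X j \<omega>) \<epsilon>) s t
            - RS_integral (\<lambda>u. Re (f (of_real u))) (Xeps (X j \<omega>) \<eta>) s t)\<^sup>2)
          (\<Sum>j<n. 36 * ((sup_norm_on f (Pi_rect s t))\<^sup>2 * cH H * \<bar>\<epsilon> - \<eta>\<bar> powr \<alpha> * (t - s) powr (2 * H - \<alpha>)
             / ((2 * H - 2 - \<alpha>) / 2 + 1)\<^sup>2))"
        using hyps False \<alpha> cH_pos[OF H'] meas cov analytic norm_le_sup_norm_on[OF hyps(6)]
        by (intro has_majorant_sum has_majorant_RS_increment[OF prob _ _ _ H']) auto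
      from has_majorant_nn_integral_le[OF this] show ?thesis
        by (simp add: c_def field_simps)
    qed simp
  qed
qed

end
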